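(* Let $\{\mathcal G,(\Gamma_0,\Gamma_1),(\widetilde\Gamma_0,\widetilde\Gamma_1)\}$ be a triple for the adjoint pair $\{S,\widetilde S\}$ satisfying (G), (D), (M), with $\rho(A_0)\neq\emptyset$, $\gamma$-fields $\gamma,\widetilde\gamma$ and Weyl function $M$. Let $B_1,B_2$ be closable operators in $\mathcal G$ and suppose that for some $\lambda_0\in\rho(A_0)$ the operator $M(\lambda_0)B_1$ is closable and: (i) $1\in\rho(B_2\overline{M(\lambda_0)B_1})$; (ii) $\operatorname{ran}(B_2\overline{M(\lambda_0)B_1})\subset\operatorname{ran}\Gamma_0\cap\operatorname{dom}B_1$; (iii) $\operatorname{ran}(B_1\upharpoonright\operatorname{ran}\Gamma_0)\subset\operatorname{ran}\Gamma_0$; (iv) $\operatorname{ran}(B_2\upharpoonright\operatorname{ran}\Gamma_1)\subset\operatorname{ran}\Gamma_0$; (v) $\operatorname{ran}(\Gamma_1\upharpoonright\ker\Gamma_0)\subset\operatorname{dom}(B_1B_2)$. Then $A_{B_1B_2}$ is a closed operator with $\lambda_0\in\rho(A_{B_1B_2})$, and for all $\lambda\in\rho(A_0)\cap\rho(A_{B_1B_2})$ $(A_{B_1B_2}-\lambda)^{-1}=(A_0-\lambda)^{-1}+\gamma(\lambda)B_1(I-B_2M(\lambda)B_1)^{-1}B_2\widetilde\gamma(\overline\lambda)^*$.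
   Context: Let $\mathfrak H$ be a separable Hilbert space. An adjoint pair $\{S,\widetilde S\}$ consists of densely defined closed operators $S,\widetilde S$ in $\mathfrak H$ with $(Sf,g)=(f,\widetilde Sg)$ for all $f\in\operatorname{dom}S$, $g\in\operatorname{dom}\widetilde S$. Fix operators $T\subset S^*$ and $\widetilde T\subset\widetilde S^*$ which are cores, i.e. $\overline T=S^*$ and $\overline{\widetilde T}=\widetilde S^*$. A triple $\{\mathcal G,(\Gamma_0,\Gamma_1),(\widetilde\Gamma_0,\widetilde\Gamma_1)\}$ for $\{S,\widetilde S\}$ consists of a Hilbert space $\mathcal G$ and linear maps $\Gamma_0,\Gamma_1:\operatorname{dom}T\to\mathcal G$, $\widetilde\Gamma_0,\widetilde\Gamma_1:\operatorname{dom}\widetilde T\to\mathcal G$. Put $A_0:=T\upharpoonright\ker\Gamma_0$ and $\widetilde A_0:=\widetilde T\upharpoonright\ker\widetilde\Gamma_0$. Conditions: (G) $(Tf,g)_{\mathfrak H}-(f,\widetilde Tg)_{\mathfrak H}=(\Gamma_1f,\widetilde\Gamma_0g)_{\mathcal G}-(\Gamma_0f,\widetilde\Gamma_1g)_{\mathcal G}$ for all $f\in\operatorname{dom}T$, $g\in\operatorname{dom}\widetilde T$; (D) $\operatorname{ran}\Gamma_0$ and $\operatorname{ran}\widetilde\Gamma_0$ are dense in $\mathcal G$; (M) $A_0^*=\widetilde A_0$ and $\widetilde A_0^*=A_0$. For $\lambda\in\rho(A_0)$ one has $\operatorname{dom}T=\ker\Gamma_0\dotplus\ker(T-\lambda)$,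 so $\Gamma_0\upharpoonright\ker(T-\lambda)$ is injective; similarly for $\widetilde T$. The $\gamma$-fields are $\gamma(\lambda):=(\Gamma_0\upharpoonright\ker(T-\lambda))^{-1}$, $\widetilde\gamma(\mu):=(\widetilde\Gamma_0\upharpoonright\ker(\widetilde T-\mu))^{-1}$; the Weyl function is $M(\lambda):=\Gamma_1\gamma(\lambda)$, $\lambda\in\rho(A_0)$. Products of operators have their natural domains, e.g. $\operatorname{dom}(B_1B_2)=\{\varphi\in\operatorname{dom}B_2:B_2\varphi\in\operatorname{dom}B_1\}$; $(I-B_2M(\lambda)B_1)^{-1}$ is the inverse of the injective operator $I-B_2M(\lambda)B_1$. For a (not necessarily closed) operator $C$ in $\mathcal G$, $1\in\rho(C)$ means $I-C$ is a bijection of $\operatorname{dom}C$ onto $\mathcal G$ with bounded inverse; similarly $\rho(A)$ for operators in $\mathfrak H$. Define $A_{B_1B_2}f:=Tf$ on $\operatorname{dom}A_{B_1B_2}:=\{f\in\operatorname{dom}T:\Gamma_1f\in\operatorname{dom}(B_1B_2),\ B_1B_2\Gamma_1f=\Gamma_0f\}$. *)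

theory Defs
  imports Complex_Main "HOL-Library.Countable_Set"
begin

text \<open>A complex Hilbert space
is represented by a carrier type 'a (an abelian group), a complex scalar multiplication sc
and an inner product ip (linear in the first, conjugate-linear in the second argument).\<close>

definition hnorm :: "('a \<Rightarrow> 'a \<Rightarrow> complex) \<Rightarrow> 'a \<Rightarrow> real" where
  "hnorm ip x = sqrt (Re (ip x x))"

definition hlim :: "('a::ab_group_add \<Rightarrow> 'a \<Rightarrow> complex) \<Rightarrow> (nat \<Rightarrow> 'a) \<Rightarrow> 'a \<Rightarrow> bool" where
  "hlim ip X x \<longleftrightarrow> (\<lambda>n. hnorm ip (X n - x)) \<longlonglongrightarrow> 0"

definition hcauchy :: "('a::ab_group_add \<Rightarrow> 'a \<Rightarrow> complex) \<Rightarrow> (nat \<Rightarrow> 'a) \<Rightarrow> bool" where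
  "hcauchy ip X \<longleftrightarrow> (\<forall>e>0. \<exists>N. \<forall>m\<ge>N. \<forall>n\<ge>N. hnorm ip (X m - X n) < e)"

definition hclosure :: "('a::ab_group_add \<Rightarrow> 'a \<Rightarrow> complex) \<Rightarrow> 'a set \<Rightarrow> 'a set" where
  "hclosure ip S = {x. \<exists>X. (\<forall>n. X n \<in> S) \<and> hlim ip X x}"

definition hdense :: "('a::ab_group_add \<Rightarrow> 'a \<Rightarrow> complex) \<Rightarrow> 'a set \<Rightarrow> bool" where
  "hdense ip S \<longleftrightarrow> hclosure ip S = UNIV"

definition hilbert_space ::
  "(complex \<Rightarrow> 'a::ab_group_add \<Rightarrow> 'a) \<Rightarrow> ('a \<Rightarrow> 'a \<Rightarrow> complex) \<Rightarrow> bool" where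
  "hilbert_space sc ip \<longleftrightarrow>
     Vector_Spaces.vector_space sc \<and>
     (\<forall>x y z. ip (x + y) z = ip x z + ip y z) \<and>
     (\<forall>c x y. ip (sc c x) y = c * ip x y) \<and>
     (\<forall>x y. ip y x = cnj (ip x y)) \<and>
     (\<forall>x. 0 \<le> Re (ip x x)) \<and>
     (\<forall>x. ip x x = 0 \<longrightarrow> x = 0) \<and>
     (\<forall>X. hcauchy ip X \<longrightarrow> (\<exists>x. hlim ip X x))"

definition separable :: "('a::ab_group_add \<Rightarrow> 'a \<Rightarrow> complex) \<Rightarrow> bool" where
  "separable ip \<longleftrightarrow> (\<exists>D. countable D \<and> hdense ip D)"

text \<open>(Unbounded) linear operators are represented by their graphs.\<close>

definition op_dom :: "('a \<times> 'b) set \<Rightarrow> 'a set" where "op_dom A = fst ` A"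
definition op_ran :: "('a \<times> 'b) set \<Rightarrow> 'b set" where "op_ran A = snd ` A"

definition is_graph :: "('a \<times> 'b) set \<Rightarrow> bool" where
  "is_graph A \<longleftrightarrow> (\<forall>x y z. (x, y) \<in> A \<and> (x, z) \<in> A \<longrightarrow> y = z)"

definition lin_op :: "(complex \<Rightarrow> 'a::ab_group_add \<Rightarrow> 'a) \<Rightarrow> (complex \<Rightarrow> 'b::ab_group_add \<Rightarrow> 'b)
    \<Rightarrow> ('a \<times> 'b) set \<Rightarrow> bool" where
  "lin_op sc1 sc2 A \<longleftrightarrow> is_graph A \<and> (0, 0) \<in> A \<and>
     (\<forall>x y u v. (x, y) \<in> A \<and> (u, v) \<in> A \<longrightarrow> (x + u, y + v) \<in> A) \<and>
     (\<forall>c x y. (x, y) \<in> A \<longrightarrow> (sc1 c x, sc2 c y) \<in> A)"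

definition lin_on :: "(complex \<Rightarrow> 'a::ab_group_add \<Rightarrow> 'a) \<Rightarrow> (complex \<Rightarrow> 'b::ab_group_add \<Rightarrow> 'b)
    \<Rightarrow> 'a set \<Rightarrow> ('a \<Rightarrow> 'b) \<Rightarrow> bool" where
  "lin_on sc1 sc2 D f \<longleftrightarrow> (\<forall>x\<in>D. \<forall>y\<in>D. f (x + y) = f x + f y) \<and>
     (\<forall>c. \<forall>x\<in>D. f (sc1 c x) = sc2 c (f x))"

definition op_closure :: "('a::ab_group_add \<Rightarrow> 'a \<Rightarrow> complex) \<Rightarrow> ('b::ab_group_add \<Rightarrow> 'b \<Rightarrow> complex)
    \<Rightarrow> ('a \<times> 'b) set \<Rightarrow> ('a \<times> 'b) set" where
  "op_closure ip1 ip2 A = {(x, y). \<exists>X Y. (\<forall>n. (X n, Y n) \<in> A) \<and> hlim ip1 X x \<and> hlim ip2 Y y}"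

definition closed_op :: "('a::ab_group_add \<Rightarrow> 'a \<Rightarrow> complex) \<Rightarrow> ('b::ab_group_add \<Rightarrow> 'b \<Rightarrow> complex)
    \<Rightarrow> ('a \<times> 'b) set \<Rightarrow> bool" where
  "closed_op ip1 ip2 A \<longleftrightarrow> op_closure ip1 ip2 A \<subseteq> A"

definition closable :: "('a::ab_group_add \<Rightarrow> 'a \<Rightarrow> complex) \<Rightarrow> ('b::ab_group_add \<Rightarrow> 'b \<Rightarrow> complex)
    \<Rightarrow> ('a \<times> 'b) set \<Rightarrow> bool" where
  "closable ip1 ip2 A \<longleftrightarrow> is_graph (op_closure ip1 ip2 A)"

definition densely_defined :: "('a::ab_group_add \<Rightarrow> 'a \<Rightarrow> complex) \<Rightarrow> ('a \<times> 'b) set \<Rightarrow> bool" where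
  "densely_defined ip A \<longleftrightarrow> hdense ip (op_dom A)"

definition op_adj :: "('a \<Rightarrow> 'a \<Rightarrow> complex) \<Rightarrow> ('b \<Rightarrow> 'b \<Rightarrow> complex)
    \<Rightarrow> ('a \<times> 'b) set \<Rightarrow> ('b \<times> 'a) set" where
  "op_adj ip1 ip2 A = {(y, z). \<forall>x w. (x, w) \<in> A \<longrightarrow> ip2 w y = ip1 x z}"

text \<open>product B A (apply A first) with natural domain\<close>
definition op_comp :: "('b \<times> 'c) set \<Rightarrow> ('a \<times> 'b) set \<Rightarrow> ('a \<times> 'c) set" where
  "op_comp B A = {(x, z). \<exists>y. (x, y) \<in> A \<and> (y, z) \<in> B}"

definition op_restrict :: "('a \<times> 'b) set \<Rightarrow> 'a set \<Rightarrow> ('a \<times> 'b) set" where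
  "op_restrict A D = {(x, y) \<in> A. x \<in> D}"

definition op_plus :: "('a \<times> 'b::plus) set \<Rightarrow> ('a \<times> 'b) set \<Rightarrow> ('a \<times> 'b) set" where
  "op_plus A B = {(x, y + z) | x y z. (x, y) \<in> A \<and> (x, z) \<in> B}"

definition op_shift :: "(complex \<Rightarrow> 'a::ab_group_add \<Rightarrow> 'a) \<Rightarrow> ('a \<times> 'a) set \<Rightarrow> complex \<Rightarrow> ('a \<times> 'a) set" where
  "op_shift sc A z = {(x, y - sc z x) | x y. (x, y) \<in> A}"

definition op_I_minus :: "('a::ab_group_add \<times> 'a) set \<Rightarrow> ('a \<times> 'a) set" where
  "op_I_minus A = {(x, x - y) | x y. (x, y) \<in> A}"

definition op_inv :: "('a \<times> 'b) set \<Rightarrow> ('b \<times> 'a) set" where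
  "op_inv A = converse A"

text \<open>resolvent set: A - z is a bijection of dom A onto the whole space with bounded inverse
  (no closedness required, as in the paper)\<close>
definition resolvent_set :: "(complex \<Rightarrow> 'a::ab_group_add \<Rightarrow> 'a) \<Rightarrow> ('a \<Rightarrow> 'a \<Rightarrow> complex)
    \<Rightarrow> ('a \<times> 'a) set \<Rightarrow> complex set" where
  "resolvent_set sc ip A = {z. is_graph (op_inv (op_shift sc A z)) \<and>
      op_ran (op_shift sc A z) = UNIV \<and>
      (\<exists>K. \<forall>x y. (y, x) \<in> op_inv (op_shift sc A z) \<longrightarrow> hnorm ip x \<le> K * hnorm ip y)}"

definition ker_restr :: "('a \<times> 'a) set \<Rightarrow> ('a \<Rightarrow> 'g::zero) \<Rightarrow> ('a \<times> 'a) set" where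
  "ker_restr T \<Gamma> = op_restrict T {f. \<Gamma> f = 0}"

text \<open>gamma field: \<gamma>(z) = (\<Gamma>0 restricted to ker(T - z))^-1, as a graph in G x H\<close>
definition gamma_field :: "(complex \<Rightarrow> 'a \<Rightarrow> 'a) \<Rightarrow> ('a \<times> 'a) set \<Rightarrow> ('a \<Rightarrow> 'g) \<Rightarrow> complex
    \<Rightarrow> ('g \<times> 'a) set" where
  "gamma_field sc T \<Gamma>0 z = {(\<Gamma>0 f, f) | f. (f, sc z f) \<in> T}"

text \<open>Weyl function M(z) = \<Gamma>1 \<gamma>(z)\<close>
definition weyl :: "(complex \<Rightarrow> 'a \<Rightarrow> 'a) \<Rightarrow> ('a \<times> 'a) set \<Rightarrow> ('a \<Rightarrow> 'g) \<Rightarrow> ('a \<Rightarrow> 'g) \<Rightarrow> complex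
    \<Rightarrow> ('g \<times> 'g) set" where
  "weyl sc T \<Gamma>0 \<Gamma>1 z = {(\<Gamma>0 f, \<Gamma>1 f) | f. (f, sc z f) \<in> T}"

definition ext_B :: "('a \<times> 'a) set \<Rightarrow> ('a \<Rightarrow> 'g) \<Rightarrow> ('a \<Rightarrow> 'g) \<Rightarrow> ('g \<times> 'g) set \<Rightarrow> ('g \<times> 'g) set
    \<Rightarrow> ('a \<times> 'a) set" where
  "ext_B T \<Gamma>0 \<Gamma>1 B1 B2 = {(f, g) \<in> T. (\<Gamma>1 f, \<Gamma>0 f) \<in> op_comp B1 B2}"

end

theory Submission
  imports Defs "HOL-Analysis.Analysis"
begin

text \<open>
  The resolvent of A_{B1 B2} at z0 is built by hand. For h, put f0 = (A0 - z0)^-1 h and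
  \<psi> = B2 \<Gamma>1 f0. Writing C for B2 composed with the closure of M(z0) B1, condition (i) yields
  \<phi> with \<phi> - C \<phi> = \<psi>, and (ii)-(iv) make B1 \<phi> = \<Gamma>0 g for an eigenvector g of T at z0, so
  that f = f0 + g solves (A_{B1 B2} - z0) f = h. The solution operator is (A0 - z0)^-1 + Q with
  Q = \<gamma>(z0) B1 (I - C)^-1 B2 \<Gamma>1 (A0 - z0)^-1, and each factor of Q is bounded by the closed
  graph theorem: \<Gamma>1 (A0 - z0)^-1 coincides with the closed operator \<gamma>t(cnj z0)^*, and a
  closable operator after a bounded everywhere defined one is closed. Hence z0 lies in the
  resolvent set, which forces A_{B1 B2} to be closed. For general z the same splitting
  f = (A0 - z)^-1 h + g, read backwards, gives the resolvent formula.
\<close>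

section \<open>Hilbert spaces\<close>

locale hspace =
  fixes sc :: "complex \<Rightarrow> 'a::ab_group_add \<Rightarrow> 'a" and ip :: "'a \<Rightarrow> 'a \<Rightarrow> complex"
  assumes hilbert: "hilbert_space sc ip"
begin

sublocale vs: vector_space sc
  using hilbert unfolding hilbert_space_def by (elim conjE)

lemma
  shows ip_add_left: "ip (x + y) z = ip x z + ip y z"
    and ip_scale_left: "ip (sc c x) y = c * ip x y"
    and ip_cnj_commute: "ip y x = cnj (ip x y)"
    and ip_self_nonneg: "0 \<le> Re (ip x x)"
    and ip_self_eq_0: "ip x x = 0 \<Longrightarrow> x = 0"
    and complete: "hcauchy ip X \<Longrightarrow> \<exists>x. hlim ip X x"
  using hilbert unfolding hilbert_space_def by (elim conjE; meson)+

lemma ip_add_right: "ip z (x + y) = ip z x + ip z y"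
  by (subst (1 2 3) ip_cnj_commute) (simp add: ip_add_left)

lemma ip_scale_right: "ip x (sc c y) = cnj c * ip x y"
  by (subst (1 2) ip_cnj_commute) (simp add: ip_scale_left)

lemma ip_zero_left [simp]: "ip 0 y = 0"
  using ip_add_left[of 0 0 y] by simp

lemma ip_zero_right [simp]: "ip y 0 = 0"
  using ip_add_right[of y 0 0] by simp

lemma ip_minus_left: "ip (- x) y = - ip x y"
  using ip_add_left[of x "- x" y] by (simp add: eq_neg_iff_add_eq_0 add.commute)

lemma ip_minus_right: "ip y (- x) = - ip y x"
  using ip_add_right[of y x "- x"] by (simp add: eq_neg_iff_add_eq_0 add.commute)

lemma ip_diff_left: "ip (x - y) z = ip x z - ip y z"
  using ip_add_left[of x "- y" z] by (simp add: ip_minus_left)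

lemma ip_diff_right: "ip z (x - y) = ip z x - ip z y"
  using ip_add_right[of z x "- y"] by (simp add: ip_minus_right)

lemma ip_self_real: "ip x x = complex_of_real (Re (ip x x))"
proof -
  have "Im (ip x x) = 0" using arg_cong[OF ip_cnj_commute[of x x], of Im] by simp
  then show ?thesis by (simp add: complex_eq_iff)
qed

abbreviation nm :: "'a \<Rightarrow> real" where "nm \<equiv> hnorm ip"

lemma nm_nonneg [simp]: "0 \<le> nm x"
  by (simp add: hnorm_def ip_self_nonneg)

lemma nm_power2: "(nm x)\<^sup>2 = Re (ip x x)"
  by (simp add: hnorm_def ip_self_nonneg)

lemma nm_eq_0_iff [simp]: "nm x = 0 \<longleftrightarrow> x = 0"
proof
  assume "nm x = 0"
  then have "ip x x = 0" using nm_power2[of x] ip_self_real[of x] by simp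
  then show "x = 0" by (rule ip_self_eq_0)
qed (simp add: hnorm_def)

lemma nm_zero [simp]: "nm 0 = 0"
  by simp

lemma ip_self_pos: "x \<noteq> 0 \<Longrightarrow> 0 < Re (ip x x)"
  by (metis nm_eq_0_iff nm_power2 zero_less_power2)

lemma nm_scale: "nm (sc c x) = cmod c * nm x"
proof -
  have "ip (sc c x) (sc c x) = (c * cnj c) * ip x x"
    by (simp add: ip_scale_left ip_scale_right mult.assoc)
  also have "c * cnj c = complex_of_real ((cmod c)\<^sup>2)" by (rule complex_norm_square[symmetric])
  finally have "Re (ip (sc c x) (sc c x)) = (cmod c)\<^sup>2 * Re (ip x x)" by simp
  then show ?thesis by (simp add: hnorm_def real_sqrt_mult)
qed

lemma nm_minus: "nm (- x) = nm x"
  using nm_scale[of "- 1" x] by simp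

lemma nm_diff_commute: "nm (x - y) = nm (y - x)"
  by (metis minus_diff_eq nm_minus)

lemma nm_power2_sub_component:
  assumes "y \<noteq> 0"
  shows "(nm (x - sc (ip x y / ip y y) y))\<^sup>2 = (nm x)\<^sup>2 - (cmod (ip x y))\<^sup>2 / (nm y)\<^sup>2"
proof -
  define b where "b = Re (ip y y)"
  have b: "b > 0" using ip_self_pos[OF assms] by (simp add: b_def)
  have yy: "ip y y = complex_of_real b" using ip_self_real by (simp add: b_def)
  define a where "a = ip x y"
  define t where "t = a / complex_of_real b"
  have yx: "ip y x = cnj a" unfolding a_def by (rule ip_cnj_commute)
  have "ip (x - sc t y) (x - sc t y) = ip x x - cnj t * a - t * cnj a + t * cnj t * complex_of_real b"
    by (simp add: ip_diff_left ip_diff_right ip_scale_left ip_scale_right yy yx a_def algebra_simps)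
  also have "\<dots> = ip x x - (a * cnj a) / complex_of_real b"
    using b by (simp add: t_def field_simps)
  also have "\<dots> = ip x x - complex_of_real ((cmod a)\<^sup>2 / b)"
    by (simp add: complex_norm_square[symmetric])
  finally have "ip (x - sc (ip x y / ip y y) y) (x - sc (ip x y / ip y y) y)
      = ip x x - complex_of_real ((cmod (ip x y))\<^sup>2 / b)"
    by (simp add: t_def a_def yy)
  then show ?thesis by (simp add: nm_power2 b_def)
qed

lemma cauchy_schwarz: "cmod (ip x y) \<le> nm x * nm y"
proof (cases "y = 0")
  case False
  have "0 \<le> (nm (x - sc (ip x y / ip y y) y))\<^sup>2" by simp
  then have "(cmod (ip x y))\<^sup>2 / (nm y)\<^sup>2 \<le> (nm x)\<^sup>2"
    unfolding nm_power2_sub_component[OF False] by simp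
  then have "(cmod (ip x y))\<^sup>2 \<le> (nm x * nm y)\<^sup>2"
    using False by (simp add: field_simps power_mult_distrib)
  then show ?thesis
    by (meson mult_nonneg_nonneg nm_nonneg power2_le_imp_le)
qed simp

lemma nm_triangle: "nm (x + y) \<le> nm x + nm y"
proof -
  have "Re (ip (x + y) (x + y)) = Re (ip x x) + Re (ip y y) + 2 * Re (ip x y)"
    using ip_cnj_commute[of x y] by (simp add: ip_add_left ip_add_right)
  also have "\<dots> \<le> (nm x)\<^sup>2 + (nm y)\<^sup>2 + 2 * (nm x * nm y)"
    using cauchy_schwarz[of x y] complex_Re_le_cmod[of "ip x y"] by (simp add: nm_power2)
  also have "\<dots> = (nm x + nm y)\<^sup>2" by (simp add: power2_eq_square algebra_simps)
  finally have "(nm (x + y))\<^sup>2 \<le> (nm x + nm y)\<^sup>2" by (simp add: nm_power2)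
  then show ?thesis by (rule power2_le_imp_le) simp
qed

lemma nm_diff_triangle: "nm (x - z) \<le> nm (x - y) + nm (y - z)"
  using nm_triangle[of "x - y" "y - z"] by simp

lemma nm_diff_le_add: "nm (x - y) \<le> nm x + nm y"
  using nm_triangle[of x "- y"] nm_minus[of y] by simp

lemma abs_nm_diff_le: "\<bar>nm x - nm y\<bar> \<le> nm (x - y)"
proof -
  have "nm x - nm y \<le> nm (x - y)" "nm y - nm x \<le> nm (y - x)"
    using nm_triangle[of "x - y" y] nm_triangle[of "y - x" x] by simp_all
  then show ?thesis using nm_diff_commute[of x y] by linarith
qed

lemma parallelogram: "(nm (x + y))\<^sup>2 + (nm (x - y))\<^sup>2 = 2 * (nm x)\<^sup>2 + 2 * (nm y)\<^sup>2"
  by (simp add: nm_power2 ip_add_left ip_add_right ip_diff_left ip_diff_right)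

end

lemma LIMSEQ_zero_dominated:
  fixes f :: "nat \<Rightarrow> 'b::real_normed_vector"
  assumes "g \<longlonglongrightarrow> 0" "\<And>n. norm (f n) \<le> g n"
  shows "f \<longlonglongrightarrow> 0"
  using Lim_null_comparison[OF always_eventually[of "\<lambda>n. norm (f n) \<le> g n"] assms(1)] assms(2)
  by blast

lemma hdense_mono: "hdense ip S \<Longrightarrow> S \<subseteq> S' \<Longrightarrow> hdense ip S'"
  unfolding hdense_def hclosure_def by blast

context hspace
begin

lemma hlim_const: "hlim ip (\<lambda>n. x) x"
  by (simp add: hlim_def)

lemma hlim_dominated:
  assumes "hlim ip Y y" "\<And>n. nm (X n - x) \<le> c * nm (Y n - y)"
  shows "hlim ip X x"
proof -
  have "(\<lambda>n. c * nm (Y n - y)) \<longlonglongrightarrow> 0"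
    using assms(1) unfolding hlim_def by (rule tendsto_mult_right_zero)
  then show ?thesis
    unfolding hlim_def by (rule LIMSEQ_zero_dominated) (use assms(2) in simp)
qed

lemma hlim_add:
  assumes "hlim ip X x" "hlim ip Y y"
  shows "hlim ip (\<lambda>n. X n + Y n) (x + y)"
proof -
  have "(\<lambda>n. nm (X n - x) + nm (Y n - y)) \<longlonglongrightarrow> 0 + 0"
    using assms unfolding hlim_def by (intro tendsto_add)
  then have "(\<lambda>n. nm (X n - x) + nm (Y n - y)) \<longlonglongrightarrow> 0" by simp
  then show ?thesis unfolding hlim_def
  proof (rule LIMSEQ_zero_dominated)
    fix n
    have "nm (X n + Y n - (x + y)) = nm ((X n - x) + (Y n - y))" by (simp add: algebra_simps)
    also have "\<dots> \<le> nm (X n - x) + nm (Y n - y)" by (rule nm_triangle)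
    finally show "norm (nm (X n + Y n - (x + y))) \<le> nm (X n - x) + nm (Y n - y)" by simp
  qed
qed

lemma hlim_scale: "hlim ip X x \<Longrightarrow> hlim ip (\<lambda>n. sc c (X n)) (sc c x)"
  by (rule hlim_dominated[where c = "cmod c"], assumption)
     (simp add: nm_scale vs.scale_right_diff_distrib[symmetric])

lemma hlim_diff:
  assumes "hlim ip X x" "hlim ip Y y"
  shows "hlim ip (\<lambda>n. X n - Y n) (x - y)"
  using hlim_add[OF assms(1) hlim_scale[OF assms(2), of "- 1"]] by simp

lemma hlim_nm: "hlim ip X x \<Longrightarrow> (\<lambda>n. nm (X n)) \<longlonglongrightarrow> nm x"
proof -
  assume "hlim ip X x"
  then have "(\<lambda>n. nm (X n) - nm x) \<longlonglongrightarrow> 0"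
    unfolding hlim_def by (rule LIMSEQ_zero_dominated) (auto intro: abs_nm_diff_le)
  then show ?thesis by (simp add: LIM_zero_iff)
qed

lemma hlim_ip_left: "hlim ip X x \<Longrightarrow> (\<lambda>n. ip (X n) y) \<longlonglongrightarrow> ip x y"
proof -
  assume "hlim ip X x"
  then have "(\<lambda>n. nm (X n - x) * nm y) \<longlonglongrightarrow> 0"
    unfolding hlim_def by (rule tendsto_mult_left_zero)
  then have "(\<lambda>n. ip (X n) y - ip x y) \<longlonglongrightarrow> 0"
    by (rule LIMSEQ_zero_dominated) (auto simp: ip_diff_left[symmetric] intro: cauchy_schwarz)
  then show ?thesis by (simp add: LIM_zero_iff)
qed

lemma hlim_ip_right: "hlim ip X x \<Longrightarrow> (\<lambda>n. ip y (X n)) \<longlonglongrightarrow> ip y x"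
proof -
  assume "hlim ip X x"
  then have "(\<lambda>n. nm y * nm (X n - x)) \<longlonglongrightarrow> 0"
    unfolding hlim_def by (rule tendsto_mult_right_zero)
  then have "(\<lambda>n. ip y (X n) - ip y x) \<longlonglongrightarrow> 0"
    by (rule LIMSEQ_zero_dominated) (auto simp: ip_diff_right[symmetric] intro: cauchy_schwarz)
  then show ?thesis by (simp add: LIM_zero_iff)
qed

lemma hlim_unique:
  assumes "hlim ip X x" "hlim ip X y"
  shows "x = y"
proof -
  have "ip x (x - y) = ip y (x - y)"
    using hlim_ip_left[OF assms(1)] hlim_ip_left[OF assms(2)] by (rule LIMSEQ_unique)
  then have "ip (x - y) (x - y) = 0" by (simp add: ip_diff_left)
  then show ?thesis using ip_self_eq_0[of "x - y"] by simp
qed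

lemma nm_le_of_hlim:
  assumes "hlim ip X x" "\<And>n. nm (X n) \<le> B"
  shows "nm x \<le> B"
  by (rule LIMSEQ_le_const2[OF hlim_nm[OF assms(1)]]) (use assms(2) in auto)

lemma orthogonal_dense_eq_0:
  assumes "hdense ip S" "\<And>s. s \<in> S \<Longrightarrow> ip s z = 0"
  shows "z = 0"
proof -
  obtain X where X: "\<And>n. X n \<in> S" "hlim ip X z"
    using assms(1) by (auto simp: hdense_def hclosure_def)
  have "(\<lambda>n. ip (X n) z) \<longlonglongrightarrow> ip z z" using X(2) by (rule hlim_ip_left)
  moreover have "(\<lambda>n. ip (X n) z) = (\<lambda>n. 0)" using X(1) assms(2) by auto
  ultimately have "ip z z = 0" by (simp add: LIMSEQ_const_iff)
  then show ?thesis by (rule ip_self_eq_0)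
qed

lemma hdense_UNIV: "hdense ip UNIV"
  unfolding hdense_def hclosure_def using hlim_const by blast

sublocale ms: Metric_space UNIV "\<lambda>x y. nm (x - y)"
  by unfold_locales (auto simp: nm_diff_commute nm_diff_triangle)

lemma mcomplete: "ms.mcomplete"
  unfolding ms.mcomplete_def
proof (intro allI impI)
  fix X assume "ms.MCauchy X"
  then have "hcauchy ip X" unfolding ms.MCauchy_def hcauchy_def by metis
  then obtain x where "hlim ip X x" using complete by blast
  then have "\<forall>e>0. \<exists>N. \<forall>n\<ge>N. nm (X n - x) < e"
    unfolding hlim_def by (simp add: LIMSEQ_iff)
  then show "\<exists>x. limitin ms.mtopology X x sequentially"
    unfolding ms.limitin_metric by (auto simp: eventually_sequentially)
qed

text \<open>Baire: the closed sets on which a real function is bounded by n cover the complete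
  space, so one of them has interior.\<close>
lemma baire_ball_in_sublevel_closure:
  fixes \<phi> :: "'a \<Rightarrow> real"
  shows "\<exists>n a r. r > 0 \<and> ms.mball a r \<subseteq> ms.mtopology closure_of {x. \<phi> x \<le> real n}"
proof (rule ccontr)
  define C where "C n = ms.mtopology closure_of {x. \<phi> x \<le> real n}" for n :: nat
  assume no_ball: "\<not> ?thesis"
  have "ms.mtopology interior_of \<Union>(range C) = {}"
  proof (rule ms.metric_Baire_category_alt[OF mcomplete])
    fix T assume "T \<in> range C"
    then obtain n where T: "T = C n" by auto
    have "ms.mtopology interior_of T = {}"
    proof (rule ccontr)
      assume "ms.mtopology interior_of T \<noteq> {}"
      then obtain a U where U: "openin ms.mtopology U" "a \<in> U" "U \<subseteq> T"
        by (auto simp: interior_of_def)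
      then obtain r where "r > 0" "ms.mball a r \<subseteq> U"
        using ms.openin_mtopology by blast
      with no_ball U(3) T show False unfolding C_def by (meson subset_trans)
    qed
    then show "closedin ms.mtopology T \<and> ms.mtopology interior_of T = {}"
      by (simp add: T C_def)
  qed simp
  moreover have "x \<in> C (nat \<lceil>\<phi> x\<rceil>)" for x
  proof -
    have "x \<in> {y. \<phi> y \<le> real (nat \<lceil>\<phi> x\<rceil>)}" by (simp add: real_nat_ceiling_ge)
    then show ?thesis
      unfolding C_def using closure_of_subset[of "{y. \<phi> y \<le> real (nat \<lceil>\<phi> x\<rceil>)}" ms.mtopology]
      by (simp add: subset_iff)
  qed
  then have "\<Union>(range C) = UNIV" by blast
  ultimately show False using interior_of_topspace[of ms.mtopology] by simp
qed

lemma hlim_of_geometric_steps: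
  assumes steps: "\<And>k. nm (t (Suc k) - t k) \<le> C / 2 ^ k"
  shows "\<exists>w. hlim ip t w \<and> nm (w - t 0) \<le> 2 * C"
proof -
  have C: "0 \<le> C" using order_trans[OF nm_nonneg steps[of 0]] by simp
  have partial: "nm (t m' - t m) \<le> 2 * C * (1 / 2 ^ m - 1 / 2 ^ m')" if "m \<le> m'" for m m'
    using that
  proof (induction m' rule: dec_induct)
    case (step k)
    have "nm (t (Suc k) - t m) \<le> nm (t k - t m) + nm (t (Suc k) - t k)"
      using nm_triangle[of "t k - t m" "t (Suc k) - t k"] by simp
    also have "\<dots> \<le> 2 * C * (1 / 2 ^ m - 1 / 2 ^ k) + C / 2 ^ k"
      using step.IH steps[of k] by linarith
    also have "\<dots> = 2 * C * (1 / 2 ^ m - 1 / 2 ^ Suc k)" by (simp add: field_simps)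
    finally show ?case .
  qed simp
  have tail: "nm (t m' - t m) \<le> 2 * C / 2 ^ m" if "m \<le> m'" for m m'
  proof -
    have "2 * C * (1 / 2 ^ m - 1 / 2 ^ m') \<le> 2 * C / 2 ^ m" using C by (simp add: field_simps)
    then show ?thesis using partial[OF that] by linarith
  qed
  have "hcauchy ip t"
    unfolding hcauchy_def
  proof (intro allI impI)
    fix e :: real assume "e > 0"
    moreover have "(\<lambda>k. 2 * C / 2 ^ k) \<longlonglongrightarrow> 0" by (rule LIMSEQ_divide_realpow_zero) simp
    ultimately obtain N where N: "\<And>k. k \<ge> N \<Longrightarrow> 2 * C / 2 ^ k < e"
      using C unfolding LIMSEQ_iff by (auto simp: abs_of_nonneg)
    have "nm (t m - t k) < e" if "m \<ge> N" "k \<ge> N" for m k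
    proof (cases "k \<le> m")
      case True then show ?thesis using tail[OF True] N[OF that(2)] by linarith
    next
      case False then show ?thesis
        using tail[of m k] N[OF that(1)] nm_diff_commute[of "t m" "t k"] by simp
    qed
    then show "\<exists>N. \<forall>m\<ge>N. \<forall>n\<ge>N. nm (t m - t n) < e" by blast
  qed
  then obtain w where w: "hlim ip t w" using complete by blast
  moreover have "nm (w - t 0) \<le> 2 * C"
    by (rule nm_le_of_hlim[OF hlim_diff[OF w hlim_const]]) (use tail[of 0] in simp)
  ultimately show ?thesis by blast
qed

lemma hcauchy_of_power2_bound:
  assumes "\<And>j k. (nm (Y j - Y k))\<^sup>2 \<le> 2 / Suc j + 2 / Suc k"
  shows "hcauchy ip Y"
  unfolding hcauchy_def
proof (intro allI impI)
  fix e :: real assume e: "e > 0"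
  obtain N :: nat where N: "4 / e\<^sup>2 < real N" by (meson reals_Archimedean2)
  have "0 < 4 / e\<^sup>2" using e by simp
  then have N_pos: "real N > 0" using N by linarith
  then have bound: "4 / real N < e\<^sup>2" using N e by (simp add: field_simps)
  have "nm (Y j - Y k) < e" if "j \<ge> N" "k \<ge> N" for j k
  proof -
    have "2 / Suc j \<le> 2 / real N" "2 / Suc k \<le> 2 / real N"
      using that N_pos by (auto simp: frac_le)
    then have "(nm (Y j - Y k))\<^sup>2 < e\<^sup>2" using assms[of j k] bound by simp
    then show ?thesis using e by (simp add: power_less_imp_less_base)
  qed
  then show "\<exists>N. \<forall>m\<ge>N. \<forall>n\<ge>N. nm (Y m - Y n) < e" by blast
qed

text \<open>A minimizing sequence is Cauchy by the parallelogram law, since midpoints of its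
  members stay in the subspace.\<close>
lemma nearest_point_in_closed_subspace:
  assumes N0: "0 \<in> N"
    and N_add: "\<And>x y. x \<in> N \<Longrightarrow> y \<in> N \<Longrightarrow> x + y \<in> N"
    and N_scale: "\<And>c x. x \<in> N \<Longrightarrow> sc c x \<in> N"
    and N_closed: "\<And>Y y. (\<And>k. Y k \<in> N) \<Longrightarrow> hlim ip Y y \<Longrightarrow> y \<in> N"
  shows "\<exists>y\<in>N. \<forall>m\<in>N. nm (x0 - y) \<le> nm (x0 - m)"
proof -
  define D where "D = (\<lambda>y. (nm (x0 - y))\<^sup>2) ` N"
  define d where "d = Inf D"
  have bdd: "bdd_below D" unfolding D_def by (rule bdd_belowI[of _ 0]) auto
  have d_le: "d \<le> (nm (x0 - y))\<^sup>2" if "y \<in> N" for y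
    unfolding d_def D_def by (rule cInf_lower) (use bdd that in \<open>auto simp: D_def\<close>)
  have "\<exists>y\<in>N. (nm (x0 - y))\<^sup>2 < d + 1 / Suc k" for k :: nat
  proof -
    have "D \<noteq> {}" using N0 by (auto simp: D_def)
    moreover have "Inf D < d + 1 / Suc k" by (simp add: d_def)
    ultimately obtain z where "z \<in> D" "z < d + 1 / Suc k" using cInf_lessD by blast
    then show ?thesis by (auto simp: D_def)
  qed
  then obtain Y where Y: "\<And>k. Y k \<in> N" "\<And>k. (nm (x0 - Y k))\<^sup>2 < d + 1 / Suc k"
    by metis
  have "(nm (Y j - Y k))\<^sup>2 \<le> 2 / Suc j + 2 / Suc k" for j k
  proof -
    have mid: "sc (1 / 2) (Y j + Y k) \<in> N" using Y(1) N_add N_scale by blast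
    have "x0 - Y j + (x0 - Y k) = sc 2 (x0 - sc (1 / 2) (Y j + Y k))"
      using vs.scale_left_distrib[of 1 1] by (simp add: vs.scale_right_diff_distrib algebra_simps)
    then have "(nm (x0 - Y j + (x0 - Y k)))\<^sup>2 \<ge> 4 * d"
      using d_le[OF mid] by (simp add: nm_scale power_mult_distrib)
    then show ?thesis
      using parallelogram[of "x0 - Y j" "x0 - Y k"] Y(2)[of j] Y(2)[of k] nm_diff_commute[of "Y j" "Y k"]
      by simp
  qed
  then obtain y where y: "hlim ip Y y" using complete hcauchy_of_power2_bound by blast
  have "y \<in> N" by (rule N_closed[OF Y(1) y])
  have "(\<lambda>k. (nm (x0 - Y k))\<^sup>2) \<longlonglongrightarrow> (nm (x0 - y))\<^sup>2"
    by (intro tendsto_power hlim_nm hlim_diff[OF hlim_const y])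
  moreover have "(\<lambda>k. d + 1 / Suc k) \<longlonglongrightarrow> d"
    using tendsto_add[OF tendsto_const LIMSEQ_inverse_real_of_nat, of d] by (simp add: inverse_eq_divide)
  ultimately have "(nm (x0 - y))\<^sup>2 \<le> d"
    using Y(2) by (intro LIMSEQ_le[of _ _ "\<lambda>k. d + 1 / Suc k"]) (auto intro: less_imp_le)
  then have "nm (x0 - y) \<le> nm (x0 - m)" if "m \<in> N" for m
    using d_le[OF that] by (simp add: power2_le_imp_le)
  then show ?thesis using \<open>y \<in> N\<close> by blast
qed

lemma orthogonal_of_nearest:
  assumes N_add: "\<And>x y. x \<in> N \<Longrightarrow> y \<in> N \<Longrightarrow> x + y \<in> N"
    and N_scale: "\<And>c x. x \<in> N \<Longrightarrow> sc c x \<in> N"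
    and y: "y \<in> N" "\<And>m. m \<in> N \<Longrightarrow> nm (x0 - y) \<le> nm (x0 - m)"
    and m: "m \<in> N"
  shows "ip (x0 - y) m = 0"
proof (cases "m = 0")
  case False
  let ?w = "x0 - y"
  have "nm ?w \<le> nm (?w - sc (ip ?w m / ip m m) m)"
    using y(2)[OF N_add[OF y(1) N_scale[OF m]]] by (simp add: algebra_simps)
  then have "(nm ?w)\<^sup>2 \<le> (nm ?w)\<^sup>2 - (cmod (ip ?w m))\<^sup>2 / (nm m)\<^sup>2"
    unfolding nm_power2_sub_component[OF False, symmetric] by (simp add: power_mono)
  then have "(cmod (ip ?w m))\<^sup>2 \<le> 0"
    using False by (simp add: divide_le_0_iff)
  then show ?thesis by simp
qed simp

theorem riesz_representation:
  assumes add: "\<And>x y. \<phi> (x + y) = \<phi> x + \<phi> y" and scale: "\<And>c x. \<phi> (sc c x) = c * \<phi> x"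
    and bounded: "\<And>x. cmod (\<phi> x) \<le> K * nm x"
  shows "\<exists>v. \<forall>x. \<phi> x = ip x v"
proof (cases "\<forall>x. \<phi> x = 0")
  case False
  then obtain x1 where "\<phi> x1 \<noteq> 0" by blast
  define x0 where "x0 = sc (1 / \<phi> x1) x1"
  have x0: "\<phi> x0 = 1" using \<open>\<phi> x1 \<noteq> 0\<close> by (simp add: x0_def scale)
  have diff: "\<phi> (x - y) = \<phi> x - \<phi> y" for x y using add[of "x - y" y] by simp
  define N where "N = {x. \<phi> x = 0}"
  have N_add: "x \<in> N \<Longrightarrow> y \<in> N \<Longrightarrow> x + y \<in> N" for x y by (simp add: N_def add)
  have N_scale: "x \<in> N \<Longrightarrow> sc c x \<in> N" for x c by (simp add: N_def scale)
  have N_closed: "y \<in> N" if "\<And>k. Y k \<in> N" "hlim ip Y y" for Y y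
  proof -
    have "(\<lambda>k. K * nm (Y k - y)) \<longlonglongrightarrow> 0"
      using that(2) unfolding hlim_def by (rule tendsto_mult_right_zero)
    moreover have "norm (\<phi> (Y k) - \<phi> y) \<le> K * nm (Y k - y)" for k
      using bounded[of "Y k - y"] by (simp add: diff)
    ultimately have "(\<lambda>k. \<phi> (Y k) - \<phi> y) \<longlonglongrightarrow> 0" by (rule LIMSEQ_zero_dominated)
    then show ?thesis using that(1) by (simp add: N_def LIMSEQ_const_iff)
  qed
  have "\<phi> 0 = 0" using scale[of 0 0] by simp
  have "\<exists>y\<in>N. \<forall>m\<in>N. nm (x0 - y) \<le> nm (x0 - m)"
  proof (rule nearest_point_in_closed_subspace)
    show "0 \<in> N" using \<open>\<phi> 0 = 0\<close> by (simp add: N_def)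
  qed (fact N_add, fact N_scale, fact N_closed)
  then obtain y where y: "y \<in> N" "\<And>m. m \<in> N \<Longrightarrow> nm (x0 - y) \<le> nm (x0 - m)"
    by blast
  define w where "w = x0 - y"
  have orth: "m \<in> N \<Longrightarrow> ip w m = 0" for m
    unfolding w_def by (rule orthogonal_of_nearest[OF N_add N_scale y])
  have "\<phi> w = 1" using x0 y(1) by (simp add: w_def diff N_def)
  then have "w \<noteq> 0" using \<open>\<phi> 0 = 0\<close> by auto
  then have ww: "ip w w \<noteq> 0" using ip_self_pos[of w] by auto
  have "\<phi> x = ip x (sc (1 / cnj (ip w w)) w)" for x
  proof -
    have "x - sc (\<phi> x) w \<in> N" using \<open>\<phi> w = 1\<close> by (simp add: N_def diff scale)
    then have "ip (x - sc (\<phi> x) w) w = 0"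
      using orth ip_cnj_commute[of w "x - sc (\<phi> x) w"] by simp
    then show ?thesis using ww by (simp add: ip_diff_left ip_scale_left ip_scale_right)
  qed
  then show ?thesis by blast
qed (auto intro!: exI[of _ 0])

end

section \<open>Linear relations\<close>

definition lin_rel :: "(complex \<Rightarrow> 'a::ab_group_add \<Rightarrow> 'a) \<Rightarrow> (complex \<Rightarrow> 'b::ab_group_add \<Rightarrow> 'b)
    \<Rightarrow> ('a \<times> 'b) set \<Rightarrow> bool" where
  "lin_rel s1 s2 A \<longleftrightarrow> (0, 0) \<in> A \<and>
     (\<forall>x y u v. (x, y) \<in> A \<and> (u, v) \<in> A \<longrightarrow> (x + u, y + v) \<in> A) \<and>
     (\<forall>c x y. (x, y) \<in> A \<longrightarrow> (s1 c x, s2 c y) \<in> A)"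

lemma lin_op_iff: "lin_op s1 s2 A \<longleftrightarrow> is_graph A \<and> lin_rel s1 s2 A"
  unfolding lin_op_def lin_rel_def by blast

lemma lin_rel_zero: "lin_rel s1 s2 A \<Longrightarrow> (0, 0) \<in> A"
  by (simp add: lin_rel_def)

lemma lin_rel_add: "lin_rel s1 s2 A \<Longrightarrow> (x, y) \<in> A \<Longrightarrow> (u, v) \<in> A \<Longrightarrow> (x + u, y + v) \<in> A"
  by (simp add: lin_rel_def)

lemma lin_rel_scale: "lin_rel s1 s2 A \<Longrightarrow> (x, y) \<in> A \<Longrightarrow> (s1 c x, s2 c y) \<in> A"
  by (simp add: lin_rel_def)

lemma lin_rel_diff:
  assumes "vector_space s1" "vector_space s2" "lin_rel s1 s2 A" "(x, y) \<in> A" "(u, v) \<in> A"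
  shows "(x - u, y - v) \<in> A"
proof -
  interpret v1: vector_space s1 by fact
  interpret v2: vector_space s2 by fact
  show ?thesis
    using lin_rel_add[OF assms(3,4) lin_rel_scale[OF assms(3,5), of "- 1"]] by simp
qed

lemma op_comp_iff: "(x, z) \<in> op_comp B A \<longleftrightarrow> (\<exists>y. (x, y) \<in> A \<and> (y, z) \<in> B)"
  by (simp add: op_comp_def)

lemma op_compI: "(x, y) \<in> A \<Longrightarrow> (y, z) \<in> B \<Longrightarrow> (x, z) \<in> op_comp B A"
  by (auto simp: op_comp_iff)

lemma op_inv_iff: "(x, y) \<in> op_inv A \<longleftrightarrow> (y, x) \<in> A"
  by (simp add: op_inv_def)

lemma op_shift_iff: "(x, y) \<in> op_shift s A z \<longleftrightarrow> (\<exists>y'. (x, y') \<in> A \<and> y = y' - s z x)"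
  by (auto simp: op_shift_def)

lemma op_plus_iff:
  "(x, y) \<in> op_plus A B \<longleftrightarrow> (\<exists>y1 y2. (x, y1) \<in> A \<and> (x, y2) \<in> B \<and> y = y1 + y2)"
  by (auto simp: op_plus_def)

lemma op_I_minus_iff: "(x, y) \<in> op_I_minus A \<longleftrightarrow> (\<exists>y'. (x, y') \<in> A \<and> y = x - y')"
  by (auto simp: op_I_minus_def)

lemma op_dom_iff: "x \<in> op_dom A \<longleftrightarrow> (\<exists>y. (x, y) \<in> A)"
  by (force simp: op_dom_def)

lemma op_ran_iff: "y \<in> op_ran A \<longleftrightarrow> (\<exists>x. (x, y) \<in> A)"
  by (force simp: op_ran_def)

lemma op_dom_UNIV_iff: "op_dom A = UNIV \<longleftrightarrow> (\<forall>x. \<exists>y. (x, y) \<in> A)"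
  by (auto simp: op_dom_iff)

lemma op_dom_comp_UNIV: "op_dom (op_comp B A) = UNIV \<Longrightarrow> op_dom A = UNIV"
  by (auto simp: op_dom_UNIV_iff op_comp_iff)

lemma lin_rel_comp: "lin_rel s2 s3 B \<Longrightarrow> lin_rel s1 s2 A \<Longrightarrow> lin_rel s1 s3 (op_comp B A)"
  unfolding lin_rel_def op_comp_def by blast

lemma lin_rel_inv: "lin_rel s1 s2 A \<Longrightarrow> lin_rel s2 s1 (op_inv A)"
  unfolding lin_rel_def op_inv_def by blast

lemma lin_rel_shift:
  assumes "vector_space s" "lin_rel s s A"
  shows "lin_rel s s (op_shift s A z)"
proof -
  interpret v: vector_space s by fact
  show ?thesis
    unfolding lin_rel_def op_shift_iff
  proof (intro conjI allI impI; (elim conjE exE)?)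
    show "\<exists>y'. (0, y') \<in> A \<and> 0 = y' - s z 0" using lin_rel_zero[OF assms(2)] by auto
  next
    fix x y u v y' v' assume "(x, y') \<in> A" "y = y' - s z x" "(u, v') \<in> A" "v = v' - s z u"
    then show "\<exists>w. (x + u, w) \<in> A \<and> y + v = w - s z (x + u)"
      using lin_rel_add[OF assms(2)] by (force simp: v.scale_right_distrib algebra_simps)
  next
    fix c x y y' assume "(x, y') \<in> A" "y = y' - s z x"
    then show "\<exists>w. (s c x, w) \<in> A \<and> s c y = w - s z (s c x)"
      using lin_rel_scale[OF assms(2)] v.scale_left_commute
      by (force simp: v.scale_right_diff_distrib)
  qed
qed

lemma is_graph_comp: "is_graph A \<Longrightarrow> is_graph B \<Longrightarrow> is_graph (op_comp B A)"
  unfolding is_graph_def op_comp_def by blast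

lemma is_graph_plus: "is_graph A \<Longrightarrow> is_graph B \<Longrightarrow> is_graph (op_plus A B)"
  unfolding is_graph_def op_plus_def by blast

lemma lin_op_comp: "lin_op s2 s3 B \<Longrightarrow> lin_op s1 s2 A \<Longrightarrow> lin_op s1 s3 (op_comp B A)"
  unfolding lin_op_iff using is_graph_comp lin_rel_comp by blast

lemma graph_eq_of_subset:
  assumes "A \<subseteq> B" "is_graph B" "op_dom A = UNIV"
  shows "A = B"
proof
  show "B \<subseteq> A"
  proof clarify
    fix x y assume "(x, y) \<in> B"
    moreover obtain y' where "(x, y') \<in> A" using assms(3) by (auto simp: op_dom_UNIV_iff)
    ultimately show "(x, y) \<in> A" using assms(1,2) unfolding is_graph_def by blast
  qed
qed (rule assms(1))

definition fun_of :: "('a \<times> 'b) set \<Rightarrow> 'a \<Rightarrow> 'b" where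
  "fun_of A x = (THE y. (x, y) \<in> A)"

lemma fun_of_eq: "is_graph A \<Longrightarrow> (x, y) \<in> A \<Longrightarrow> fun_of A x = y"
  unfolding fun_of_def is_graph_def by blast

lemma fun_of_mem: "is_graph A \<Longrightarrow> x \<in> op_dom A \<Longrightarrow> (x, fun_of A x) \<in> A"
  unfolding op_dom_def by (auto simp: fun_of_eq)

lemma fun_of_linear:
  assumes "lin_op s1 s2 A" "op_dom A = UNIV"
  shows "fun_of A (x + y) = fun_of A x + fun_of A y"
    and "fun_of A (s1 c x) = s2 c (fun_of A x)"
    and "fun_of A 0 = 0"
proof -
  have gr: "is_graph A" and lin: "lin_rel s1 s2 A" using assms(1) by (simp_all add: lin_op_iff)
  have mem: "(x, fun_of A x) \<in> A" for x using fun_of_mem[OF gr] assms(2) by simp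
  show "fun_of A (x + y) = fun_of A x + fun_of A y"
    by (rule fun_of_eq[OF gr lin_rel_add[OF lin mem mem]])
  show "fun_of A (s1 c x) = s2 c (fun_of A x)"
    by (rule fun_of_eq[OF gr lin_rel_scale[OF lin mem]])
  show "fun_of A 0 = 0"
    by (rule fun_of_eq[OF gr lin_rel_zero[OF lin]])
qed

lemma lin_on_op_dom:
  assumes "vector_space s1" "vector_space s2" "lin_rel s1 s1 T" "lin_on s1 s2 (op_dom T) f"
  shows "x \<in> op_dom T \<Longrightarrow> y \<in> op_dom T \<Longrightarrow> f (x + y) = f x + f y"
    and "x \<in> op_dom T \<Longrightarrow> f (s1 c x) = s2 c (f x)"
    and "x \<in> op_dom T \<Longrightarrow> y \<in> op_dom T \<Longrightarrow> f (x - y) = f x - f y"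
    and "f 0 = 0"
proof -
  interpret v1: vector_space s1 by fact
  interpret v2: vector_space s2 by fact
  show add: "f (x + y) = f x + f y" if "x \<in> op_dom T" "y \<in> op_dom T" for x y
    using assms(4) that by (simp add: lin_on_def)
  show scale: "f (s1 c x) = s2 c (f x)" if "x \<in> op_dom T" for c x
    using assms(4) that by (simp add: lin_on_def)
  show "f (x - y) = f x - f y" if x: "x \<in> op_dom T" and y: "y \<in> op_dom T"
  proof -
    obtain v where "(y, v) \<in> T" using y by (auto simp: op_dom_iff)
    then have "(s1 (- 1) y, s1 (- 1) v) \<in> T" by (rule lin_rel_scale[OF assms(3)])
    then have "- y \<in> op_dom T" by (auto simp: op_dom_iff)
    moreover have "f (- y) = - f y" using scale[OF y, of "- 1"] by simp
    ultimately show ?thesis using add[OF x, of "- y"] by simp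
  qed
  have "0 \<in> op_dom T" using lin_rel_zero[OF assms(3)] by (meson op_dom_iff)
  then show "f 0 = 0" using scale[of 0 0] by simp
qed

lemma is_graph_inv_I_minus:
  assumes "vector_space s" "lin_rel s s C" "\<And>d. (d, d) \<in> C \<Longrightarrow> d = 0"
  shows "is_graph (op_inv (op_I_minus C))"
  unfolding is_graph_def op_inv_iff op_I_minus_iff
proof (intro allI impI, elim conjE exE)
  fix a x x' y y' assume h: "(x, y) \<in> C" "a = x - y" "(x', y') \<in> C" "a = x' - y'"
  have "(x - x', y - y') \<in> C" by (rule lin_rel_diff[OF assms(1,1,2) h(1,3)])
  moreover have "y - y' = x - x'" using h(2,4) by (simp add: algebra_simps)
  ultimately have "(x - x', x - x') \<in> C" by simp
  then show "x = x'" using assms(3) by fastforce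
qed

definition graph_on :: "'a set \<Rightarrow> ('a \<Rightarrow> 'b) \<Rightarrow> ('a \<times> 'b) set" where
  "graph_on D f = {(x, f x) | x. x \<in> D}"

lemma graph_on_iff: "(x, y) \<in> graph_on D f \<longleftrightarrow> x \<in> D \<and> y = f x"
  by (auto simp: graph_on_def)

lemma is_graph_graph_on: "is_graph (graph_on D f)"
  by (simp add: is_graph_def graph_on_iff)

lemma lin_rel_graph_on:
  assumes "vector_space s1" "vector_space s2" "lin_rel s1 s1 T" "lin_on s1 s2 (op_dom T) f"
  shows "lin_rel s1 s2 (graph_on (op_dom T) f)"
  unfolding lin_rel_def graph_on_iff
proof (intro conjI allI impI; (elim conjE)?)
  have "(0, 0) \<in> T" by (rule lin_rel_zero[OF assms(3)])
  then show "0 \<in> op_dom T" by (auto simp: op_dom_iff)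
  show "0 = f 0" by (simp add: lin_on_op_dom(4)[OF assms])
next
  fix x y u v assume "x \<in> op_dom T" "y = f x" "u \<in> op_dom T" "v = f u"
  moreover from this obtain x' u' where xu: "(x, x') \<in> T" "(u, u') \<in> T" by (auto simp: op_dom_iff)
  moreover have "x + u \<in> op_dom T" using lin_rel_add[OF assms(3) xu] by (auto simp: op_dom_iff)
  ultimately show "x + u \<in> op_dom T" "y + v = f (x + u)"
    using lin_on_op_dom(1)[OF assms] by simp_all
next
  fix c x y assume "x \<in> op_dom T" "y = f x"
  moreover from this obtain x' where "(x, x') \<in> T" by (auto simp: op_dom_iff)
  then have "s1 c x \<in> op_dom T" using lin_rel_scale[OF assms(3)] by (auto simp: op_dom_iff)
  ultimately show "s1 c x \<in> op_dom T" "s2 c y = f (s1 c x)"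
    using lin_on_op_dom(2)[OF assms] by simp_all
qed
lemma lin_rel_I_minus:
  assumes "vector_space s" "lin_rel s s A"
  shows "lin_rel s s (op_I_minus A)"
proof -
  interpret v: vector_space s by fact
  show ?thesis
    unfolding lin_rel_def op_I_minus_iff
  proof (intro conjI allI impI; (elim conjE exE)?)
    show "\<exists>y'. (0, y') \<in> A \<and> 0 = 0 - y'" using lin_rel_zero[OF assms(2)] by auto
  next
    fix x y u v y' v' assume "(x, y') \<in> A" "y = x - y'" "(u, v') \<in> A" "v = u - v'"
    then show "\<exists>w. (x + u, w) \<in> A \<and> y + v = x + u - w"
      using lin_rel_add[OF assms(2)] by (force simp: algebra_simps)
  next
    fix c x y y' assume "(x, y') \<in> A" "y = x - y'"
    then show "\<exists>w. (s c x, w) \<in> A \<and> s c y = s c x - w"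
      using lin_rel_scale[OF assms(2)] by (force simp: v.scale_right_diff_distrib)
  qed
qed

lemma resolvent_set_inj:
  "z \<in> resolvent_set sc ip A \<Longrightarrow> (x, y) \<in> A \<Longrightarrow> (x', y') \<in> A \<Longrightarrow>
    y - sc z x = y' - sc z x' \<Longrightarrow> x = x'"
  unfolding resolvent_set_def is_graph_def op_inv_iff op_shift_iff by blast

lemma op_ran_UNIV_iff: "op_ran A = UNIV \<longleftrightarrow> (\<forall>y. \<exists>x. (x, y) \<in> A)"
  by (auto simp: op_ran_iff)

lemma op_dom_op_inv: "op_dom (op_inv A) = op_ran A"
  by (auto simp: op_dom_iff op_ran_iff op_inv_iff)

lemma resolvent_set_surj: "z \<in> resolvent_set sc ip A \<Longrightarrow> \<exists>x y. (x, y) \<in> A \<and> h = y - sc z x"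
  unfolding resolvent_set_def op_ran_UNIV_iff op_shift_iff by blast

lemma resolvent_set_bound:
  "z \<in> resolvent_set sc ip A \<Longrightarrow>
    \<exists>K. \<forall>x y. (x, y) \<in> A \<longrightarrow> hnorm ip x \<le> K * hnorm ip (y - sc z x)"
  unfolding resolvent_set_def op_inv_iff op_shift_iff by blast

lemma resolvent_setI:
  assumes "\<And>x y x' y'. (x, y) \<in> A \<Longrightarrow> (x', y') \<in> A \<Longrightarrow> y - sc z x = y' - sc z x' \<Longrightarrow> x = x'"
    and "\<And>h. \<exists>x y. (x, y) \<in> A \<and> h = y - sc z x"
    and "\<And>x y. (x, y) \<in> A \<Longrightarrow> hnorm ip x \<le> K * hnorm ip (y - sc z x)"
  shows "z \<in> resolvent_set sc ip A"
proof -
  have "is_graph (op_inv (op_shift sc A z))"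
    unfolding is_graph_def op_inv_iff op_shift_iff using assms(1) by blast
  moreover have "op_ran (op_shift sc A z) = UNIV"
    unfolding op_ran_UNIV_iff op_shift_iff using assms(2) by blast
  moreover have "\<forall>x y. (y, x) \<in> op_inv (op_shift sc A z) \<longrightarrow> hnorm ip x \<le> K * hnorm ip y"
    unfolding op_inv_iff op_shift_iff using assms(3) by blast
  ultimately show ?thesis unfolding resolvent_set_def by blast
qed

lemma resolvent_is_graph: "z \<in> resolvent_set sc ip A \<Longrightarrow> is_graph (op_inv (op_shift sc A z))"
  by (simp add: resolvent_set_def)

lemma resolvent_dom: "z \<in> resolvent_set sc ip A \<Longrightarrow> op_dom (op_inv (op_shift sc A z)) = UNIV"
  by (simp add: resolvent_set_def op_dom_op_inv)

section \<open>Bounded operators and the closed graph theorem\<close>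

definition op_bounded :: "('a \<Rightarrow> 'a \<Rightarrow> complex) \<Rightarrow> ('b \<Rightarrow> 'b \<Rightarrow> complex) \<Rightarrow> ('a \<times> 'b) set \<Rightarrow> bool"
  where "op_bounded ip1 ip2 A \<longleftrightarrow> (\<exists>K. \<forall>x y. (x, y) \<in> A \<longrightarrow> hnorm ip2 y \<le> K * hnorm ip1 x)"

lemma op_boundedI: "(\<And>x y. (x, y) \<in> A \<Longrightarrow> hnorm ip2 y \<le> K * hnorm ip1 x) \<Longrightarrow> op_bounded ip1 ip2 A"
  unfolding op_bounded_def by blast

lemma resolvent_bounded: "z \<in> resolvent_set sc ip A \<Longrightarrow> op_bounded ip ip (op_inv (op_shift sc A z))"
  unfolding resolvent_set_def op_bounded_def by blast

locale hspace2 = H1: hspace sc1 ip1 + H2: hspace sc2 ip2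
  for sc1 :: "complex \<Rightarrow> 'a::ab_group_add \<Rightarrow> 'a" and ip1
  and sc2 :: "complex \<Rightarrow> 'b::ab_group_add \<Rightarrow> 'b" and ip2
begin

lemma approx_near_center:
  assumes diff: "\<And>x y. F (x - y) = F x - F y"
    and ball: "H1.ms.mball a r \<subseteq> H1.ms.mtopology closure_of {x. H2.nm (F x) \<le> B}"
    and "H1.nm x < r" "e > 0"
  shows "\<exists>y. H1.nm (x - y) < e \<and> H2.nm (F y) \<le> 2 * B"
proof -
  have near: "\<exists>y. H2.nm (F y) \<le> B \<and> H1.nm (z - y) < e / 2" if "z \<in> H1.ms.mball a r" for z
    using subsetD[OF ball that] \<open>e > 0\<close> unfolding H1.ms.metric_closure_of
    by (auto dest!: spec[where x = "e / 2"])
  have "0 < r" using assms(3) H1.nm_nonneg[of x] by linarith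
  then have "a + x \<in> H1.ms.mball a r" "a \<in> H1.ms.mball a r"
    using assms(3) by (auto simp: H1.nm_minus)
  then obtain y1 y2 where y1: "H2.nm (F y1) \<le> B" "H1.nm ((a + x) - y1) < e / 2"
    and y2: "H2.nm (F y2) \<le> B" "H1.nm (a - y2) < e / 2"
    using near by blast
  have "H1.nm (x - (y1 - y2)) \<le> H1.nm ((a + x) - y1) + H1.nm (a - y2)"
    using H1.nm_diff_le_add[of "(a + x) - y1" "a - y2"] by (simp add: algebra_simps)
  moreover have "H2.nm (F (y1 - y2)) \<le> 2 * B"
    using H2.nm_diff_le_add[of "F y1" "F y2"] y1 y2 by (simp add: diff)
  ultimately show ?thesis using y1 y2 by (intro exI[of _ "y1 - y2"]) auto
qed

lemma approx_homogeneous: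
  assumes scale: "\<And>c x. F (sc1 c x) = sc2 c (F x)" and r: "r > 0"
    and near: "\<And>x e. H1.nm x < r \<Longrightarrow> e > 0 \<Longrightarrow> \<exists>y. H1.nm (x - y) < e \<and> H2.nm (F y) \<le> B"
    and e: "e > 0"
  shows "\<exists>y. H1.nm (x - y) < e \<and> H2.nm (F y) \<le> 2 * B / r * H1.nm x"
proof (cases "x = 0")
  case True
  have "F 0 = 0" using scale[of 0 0] by simp
  then show ?thesis using True e by (intro exI[of _ 0]) auto
next
  case False
  then have nx: "H1.nm x > 0" using H1.nm_nonneg less_eq_real_def by auto
  define s where "s = r / (2 * H1.nm x)"
  have s: "s > 0" using r nx by (simp add: s_def)
  have "H1.nm (sc1 (of_real s) x) = s * H1.nm x" using s by (simp add: H1.nm_scale)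
  also have "\<dots> = r / 2" using nx False by (simp add: s_def)
  finally have "H1.nm (sc1 (of_real s) x) < r" using r by simp
  then obtain y' where y': "H1.nm (sc1 (of_real s) x - y') < e * s" "H2.nm (F y') \<le> B"
    using near[of "sc1 (of_real s) x" "e * s"] e s by auto
  define y where "y = sc1 (of_real (1 / s)) y'"
  have "x - y = sc1 (of_real (1 / s)) (sc1 (of_real s) x - y')"
    using s by (simp add: y_def H1.vs.scale_right_diff_distrib)
  then have "H1.nm (x - y) = H1.nm (sc1 (of_real s) x - y') / s"
    using s by (simp add: H1.nm_scale norm_divide)
  also have "\<dots> < e" using y'(1) s by (simp add: field_simps)
  finally have "H1.nm (x - y) < e" .
  moreover have "H2.nm (F y) = H2.nm (F y') / s"
    using s by (simp add: y_def scale H2.nm_scale norm_divide)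
  moreover have "H2.nm (F y') / s \<le> 2 * B / r * H1.nm x"
    using y'(2) s r nx by (simp add: s_def field_simps)
  ultimately show ?thesis by auto
qed

text \<open>Successive approximation: the corrections g_k have norms c / 2^k, their images
  norms M c / 2^k, and the closed graph identifies the limit of the images.\<close>
lemma bounded_of_approx:
  assumes add: "\<And>x y. F (x + y) = F x + F y" and F0: "F 0 = 0"
    and closed: "\<And>X x w. hlim ip1 X x \<Longrightarrow> hlim ip2 (\<lambda>n. F (X n)) w \<Longrightarrow> F x = w"
    and approx: "\<And>x e. e > 0 \<Longrightarrow> \<exists>y. H1.nm (x - y) < e \<and> H2.nm (F y) \<le> M * H1.nm x"
  shows "H2.nm (F x) \<le> 2 * M * H1.nm x"
proof (cases "x = 0")
  case False
  define c where "c = H1.nm x"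
  have c: "c > 0" using False H1.nm_nonneg less_eq_real_def unfolding c_def by auto
  define g where "g k u = (SOME y. H1.nm (u - y) < c / 2 ^ Suc k \<and> H2.nm (F y) \<le> M * H1.nm u)"
    for k :: nat and u
  have g: "H1.nm (u - g k u) < c / 2 ^ Suc k \<and> H2.nm (F (g k u)) \<le> M * H1.nm u" for k u
    unfolding g_def by (rule someI_ex) (rule approx, use c in simp)
  define s where "s = rec_nat 0 (\<lambda>k sk. sk + g k (x - sk))"
  have s0: "s 0 = 0" and sS: "s (Suc k) = s k + g k (x - s k)" for k by (simp_all add: s_def)
  have res: "H1.nm (x - s k) \<le> c / 2 ^ k" for k
  proof (induction k)
    case (Suc k)
    have "x - s (Suc k) = (x - s k) - g k (x - s k)" by (simp add: sS algebra_simps)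
    then show ?case using g[of "x - s k" k] by (simp only:) simp
  qed (simp add: s0 c_def)
  obtain y where "H2.nm (F y) \<le> M * c" using approx[of 1 x] by (auto simp: c_def)
  then have "0 \<le> M * c" using H2.nm_nonneg order_trans by blast
  then have "0 \<le> M" using c by (simp add: zero_le_mult_iff)
  have "H2.nm (F (s (Suc k)) - F (s k)) \<le> M * c / 2 ^ k" for k
    using order_trans[OF conjunct2[OF g[of "x - s k" k]] mult_left_mono[OF res \<open>0 \<le> M\<close>]]
    by (simp add: sS add)
  then obtain w where w: "hlim ip2 (\<lambda>k. F (s k)) w" "H2.nm (w - F (s 0)) \<le> 2 * (M * c)"
    using H2.hlim_of_geometric_steps[of "\<lambda>k. F (s k)" "M * c"] by auto
  have "hlim ip1 s x"
    unfolding hlim_def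
  proof (rule LIMSEQ_zero_dominated)
    show "(\<lambda>k. c / 2 ^ k) \<longlonglongrightarrow> 0" by (rule LIMSEQ_divide_realpow_zero) simp
    show "norm (H1.nm (s k - x)) \<le> c / 2 ^ k" for k
      using res[of k] H1.nm_diff_commute[of "s k" x] by simp
  qed
  then have "F x = w" by (rule closed[OF _ w(1)])
  then show ?thesis using w(2) by (simp add: s0 F0 c_def)
qed (simp add: F0)

theorem closed_graph_theorem:
  assumes lin: "lin_op sc1 sc2 A" and dom: "op_dom A = UNIV" and closed: "closed_op ip1 ip2 A"
  shows "op_bounded ip1 ip2 A"
proof -
  define F where "F = fun_of A"
  have gr: "is_graph A" using lin by (simp add: lin_op_iff)
  have mem: "(x, F x) \<in> A" for x using fun_of_mem[OF gr] dom by (simp add: F_def)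
  note linear = fun_of_linear[OF lin dom, folded F_def]
  have diff: "F (x - y) = F x - F y" for x y
    using linear(1)[of "x - y" y] by simp
  have graph: "F x = w" if "hlim ip1 X x" "hlim ip2 (\<lambda>n. F (X n)) w" for X x w
  proof -
    have "(x, w) \<in> op_closure ip1 ip2 A"
      unfolding op_closure_def using mem that by (auto intro!: exI[of _ X] exI[of _ "\<lambda>n. F (X n)"])
    then show ?thesis using closed fun_of_eq[OF gr] by (auto simp: closed_op_def F_def)
  qed
  obtain n a r where r: "r > 0"
    and ball: "H1.ms.mball a r \<subseteq> H1.ms.mtopology closure_of {x. H2.nm (F x) \<le> real n}"
    using H1.baire_ball_in_sublevel_closure[of "\<lambda>x. H2.nm (F x)"] by blast
  have "H2.nm (F x) \<le> 2 * (2 * (2 * real n) / r) * H1.nm x" for x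
    by (rule bounded_of_approx[OF linear(1) linear(3) graph approx_homogeneous[OF linear(2) r]])
       (auto intro: approx_near_center[OF diff ball])
  then show ?thesis
    by (intro op_boundedI[where K = "2 * (2 * (2 * real n) / r)"]) (metis F_def fun_of_eq[OF gr])
qed

end

context hspace
begin

lemma I_minus_inv_iff: "(y, x) \<in> op_inv (op_I_minus C) \<longleftrightarrow> (- y, x) \<in> op_inv (op_shift sc C 1)"
  by (auto simp: op_inv_iff op_I_minus_iff op_shift_iff) (metis minus_diff_eq minus_minus)

lemma I_minus_inv_lin_op:
  assumes "1 \<in> resolvent_set sc ip C"
  shows "is_graph (op_inv (op_I_minus C))" "op_dom (op_inv (op_I_minus C)) = UNIV"
    and "op_bounded ip ip (op_inv (op_I_minus C))"
proof -
  note R = resolvent_is_graph[OF assms] resolvent_dom[OF assms] resolvent_bounded[OF assms]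
  show "is_graph (op_inv (op_I_minus C))"
    using R(1) unfolding is_graph_def I_minus_inv_iff by blast
  show "op_dom (op_inv (op_I_minus C)) = UNIV"
  proof (unfold op_dom_UNIV_iff, intro allI)
    fix y
    obtain x where "(- y, x) \<in> op_inv (op_shift sc C 1)" using R(2) by (auto simp: op_dom_UNIV_iff)
    then show "\<exists>x. (y, x) \<in> op_inv (op_I_minus C)" by (auto simp: I_minus_inv_iff)
  qed
  obtain K where "\<And>y x. (- y, x) \<in> op_inv (op_shift sc C 1) \<Longrightarrow> nm x \<le> K * nm (- y)"
    using R(3) unfolding op_bounded_def by blast
  then show "op_bounded ip ip (op_inv (op_I_minus C))"
    by (intro op_boundedI[where K = K]) (simp add: I_minus_inv_iff nm_minus)
qed

lemma closed_of_resolvent: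
  assumes lin: "lin_rel sc sc A" and z: "z \<in> resolvent_set sc ip A"
  shows "closed_op ip ip A"
  unfolding closed_op_def
proof clarify
  fix f u assume "(f, u) \<in> op_closure ip ip A"
  then obtain F U where FU: "\<And>n. (F n, U n) \<in> A" "hlim ip F f" "hlim ip U u"
    unfolding op_closure_def by blast
  obtain K where K: "\<And>x y. (x, y) \<in> A \<Longrightarrow> nm x \<le> K * nm (y - sc z x)"
    using resolvent_set_bound[OF z] by blast
  obtain f' u' where f': "(f', u') \<in> A" "u - sc z f = u' - sc z f'"
    using resolvent_set_surj[OF z] by blast
  have "hlim ip F f'"
  proof (rule hlim_dominated[OF hlim_diff[OF FU(3) hlim_scale[OF FU(2)]]])
    fix n
    have "(F n - f', U n - u') \<in> A" by (rule lin_rel_diff[OF vs.vector_space_axioms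
        vs.vector_space_axioms lin FU(1) f'(1)])
    then have "nm (F n - f') \<le> K * nm ((U n - u') - sc z (F n - f'))" by (rule K)
    also have "(U n - u') - sc z (F n - f') = (U n - sc z (F n)) - (u - sc z f)"
      using f'(2) by (simp add: vs.scale_right_diff_distrib algebra_simps)
    finally show "nm (F n - f') \<le> K * nm (U n - sc z (F n) - (u - sc z f))" .
  qed
  then have "f = f'" using FU(2) hlim_unique by blast
  then show "(f, u) \<in> A" using f' by simp
qed

text \<open>The functional x \<mapsto> (R x, u) with R the resolvent of A at z is bounded; its Riesz
  representative v solves (A* - cnj z) v = u.\<close>
lemma adjoint_shift_surj:
  assumes lin: "lin_rel sc sc A" and z: "z \<in> resolvent_set sc ip A"
  shows "\<exists>v. (v, u + sc (cnj z) v) \<in> op_adj ip ip A"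
proof -
  define R where "R = fun_of (op_inv (op_shift sc A z))"
  have R_lin: "lin_op sc sc (op_inv (op_shift sc A z))"
    unfolding lin_op_iff
    using resolvent_is_graph[OF z] lin_rel_inv[OF lin_rel_shift[OF vs.vector_space_axioms lin]] by blast
  have R: "(R h, h + sc z (R h)) \<in> A" for h
  proof -
    obtain y where "(R h, y) \<in> A" "h = y - sc z (R h)"
      using fun_of_mem[OF resolvent_is_graph[OF z], of h] resolvent_dom[OF z]
      by (auto simp: R_def op_inv_iff op_shift_iff)
    moreover from this(2) have "h + sc z (R h) = y" by (simp add: algebra_simps)
    ultimately show ?thesis by simp
  qed
  have R_eq: "(f, h + sc z f) \<in> A \<Longrightarrow> R h = f" for f h
    using resolvent_set_inj[OF z R[of h], of f "h + sc z f"] by simp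
  note R_linear = fun_of_linear[OF R_lin resolvent_dom[OF z], folded R_def]
  obtain K where K: "\<And>x y. (x, y) \<in> A \<Longrightarrow> nm x \<le> K * nm (y - sc z x)"
    using resolvent_set_bound[OF z] by blast
  have "\<exists>v. \<forall>x. ip (R x) u = ip x v"
  proof (rule riesz_representation)
    show "ip (R (x + y)) u = ip (R x) u + ip (R y) u" for x y
      by (simp add: R_linear(1) ip_add_left)
    show "ip (R (sc c x)) u = c * ip (R x) u" for c x
      by (simp add: R_linear(2) ip_scale_left)
    show "cmod (ip (R x) u) \<le> (K * nm u) * nm x" for x
      using order_trans[OF cauchy_schwarz[of "R x" u] mult_right_mono[OF K[OF R[of x]] nm_nonneg[of u]]]
      by (simp add: algebra_simps)
  qed
  then obtain v where v: "\<And>x. ip (R x) u = ip x v" by blast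
  have "ip w v = ip f (u + sc (cnj z) v)" if "(f, w) \<in> A" for f w
  proof -
    have "R (w - sc z f) = f" using that by (intro R_eq) simp
    then have "ip f u = ip (w - sc z f) v" using v[of "w - sc z f"] by simp
    then show ?thesis by (simp add: ip_diff_left ip_scale_left ip_add_right ip_scale_right)
  qed
  then show ?thesis unfolding op_adj_def by blast
qed

end

context hspace2
begin

lemma subset_op_closure: "A \<subseteq> op_closure ip1 ip2 A"
  unfolding op_closure_def using H1.hlim_const H2.hlim_const by fast

lemma lin_rel_closure:
  assumes "lin_rel sc1 sc2 A"
  shows "lin_rel sc1 sc2 (op_closure ip1 ip2 A)"
  unfolding lin_rel_def
proof (intro conjI allI impI)
  show "(0, 0) \<in> op_closure ip1 ip2 A" using subset_op_closure lin_rel_zero[OF assms] by blast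
next
  fix x y u v assume "(x, y) \<in> op_closure ip1 ip2 A \<and> (u, v) \<in> op_closure ip1 ip2 A"
  then obtain X Y U V where "\<forall>n. (X n, Y n) \<in> A" "hlim ip1 X x" "hlim ip2 Y y"
    "\<forall>n. (U n, V n) \<in> A" "hlim ip1 U u" "hlim ip2 V v" unfolding op_closure_def by blast
  then show "(x + u, y + v) \<in> op_closure ip1 ip2 A" unfolding op_closure_def
    using lin_rel_add[OF assms] H1.hlim_add H2.hlim_add
    by (auto intro!: exI[of _ "\<lambda>n. X n + U n"] exI[of _ "\<lambda>n. Y n + V n"])
next
  fix c x y assume "(x, y) \<in> op_closure ip1 ip2 A"
  then obtain X Y where "\<forall>n. (X n, Y n) \<in> A" "hlim ip1 X x" "hlim ip2 Y y"
    unfolding op_closure_def by blast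
  then show "(sc1 c x, sc2 c y) \<in> op_closure ip1 ip2 A" unfolding op_closure_def
    using lin_rel_scale[OF assms] H1.hlim_scale H2.hlim_scale
    by (auto intro!: exI[of _ "\<lambda>n. sc1 c (X n)"] exI[of _ "\<lambda>n. sc2 c (Y n)"])
qed

lemma closed_op_adj: "closed_op ip2 ip1 (op_adj ip1 ip2 A)"
  unfolding closed_op_def
proof clarify
  fix y z assume "(y, z) \<in> op_closure ip2 ip1 (op_adj ip1 ip2 A)"
  then obtain Y Z where YZ: "\<And>n. (Y n, Z n) \<in> op_adj ip1 ip2 A" "hlim ip2 Y y" "hlim ip1 Z z"
    unfolding op_closure_def by blast
  have "ip2 w y = ip1 x z" if "(x, w) \<in> A" for x w
  proof -
    have "(\<lambda>n. ip2 w (Y n)) = (\<lambda>n. ip1 x (Z n))" using YZ(1) that by (auto simp: op_adj_def)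
    then have "(\<lambda>n. ip2 w (Y n)) \<longlonglongrightarrow> ip1 x z" using H1.hlim_ip_right[OF YZ(3), of x] by simp
    then show ?thesis using H2.hlim_ip_right[OF YZ(2), of w] by (rule LIMSEQ_unique[rotated])
  qed
  then show "(y, z) \<in> op_adj ip1 ip2 A" by (simp add: op_adj_def)
qed

lemma is_graph_op_adj:
  assumes "hdense ip1 (op_dom A)"
  shows "is_graph (op_adj ip1 ip2 A)"
  unfolding is_graph_def
proof (intro allI impI, elim conjE)
  fix y z z' assume "(y, z) \<in> op_adj ip1 ip2 A" "(y, z') \<in> op_adj ip1 ip2 A"
  then have "ip1 x (z - z') = 0" if "x \<in> op_dom A" for x
    using that by (auto simp: op_adj_def op_dom_iff H1.ip_diff_right)
  then have "z - z' = 0" by (rule H1.orthogonal_dense_eq_0[OF assms])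
  then show "z = z'" by simp
qed

lemma closable_of_subset:
  assumes "A \<subseteq> B" "closed_op ip1 ip2 B" "is_graph B"
  shows "closable ip1 ip2 A"
proof -
  have "op_closure ip1 ip2 A \<subseteq> op_closure ip1 ip2 B"
    using assms(1) unfolding op_closure_def by blast
  then have "op_closure ip1 ip2 A \<subseteq> B"
    using assms(2) unfolding closed_op_def by blast
  then show ?thesis using assms(3) unfolding closable_def is_graph_def by blast
qed

lemma hlim_of_op_bounded:
  assumes "lin_rel sc1 sc2 A" "op_bounded ip1 ip2 A"
    and "\<And>n. (X n, Y n) \<in> A" "hlim ip1 X x" "(x, y) \<in> A"
  shows "hlim ip2 Y y"
proof -
  obtain K where K: "\<And>x y. (x, y) \<in> A \<Longrightarrow> H2.nm y \<le> K * H1.nm x"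
    using assms(2) unfolding op_bounded_def by blast
  have "(\<lambda>n. K * H1.nm (X n - x)) \<longlonglongrightarrow> 0"
    using assms(4) unfolding hlim_def by (rule tendsto_mult_right_zero)
  then show ?thesis
    unfolding hlim_def
  proof (rule LIMSEQ_zero_dominated)
    fix n
    have "(X n - x, Y n - y) \<in> A"
      by (rule lin_rel_diff[OF H1.vs.vector_space_axioms H2.vs.vector_space_axioms assms(1,3,5)])
    then show "norm (H2.nm (Y n - y)) \<le> K * H1.nm (X n - x)" using K by simp
  qed
qed

end

locale hspace3 = hspace2 sc1 ip1 sc2 ip2 + H3: hspace sc3 ip3
  for sc1 :: "complex \<Rightarrow> 'a::ab_group_add \<Rightarrow> 'a" and ip1
  and sc2 :: "complex \<Rightarrow> 'b::ab_group_add \<Rightarrow> 'b" and ip2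
  and sc3 :: "complex \<Rightarrow> 'c::ab_group_add \<Rightarrow> 'c" and ip3
begin

lemma closed_op_comp:
  assumes lin: "lin_rel sc1 sc2 A" and bounded: "op_bounded ip1 ip2 A"
    and closable: "closable ip2 ip3 B" and dom: "op_dom (op_comp B A) = UNIV"
  shows "closed_op ip1 ip3 (op_comp B A)"
  unfolding closed_op_def
proof clarify
  fix x y assume "(x, y) \<in> op_closure ip1 ip3 (op_comp B A)"
  then obtain X Y where XY: "\<And>n. (X n, Y n) \<in> op_comp B A" "hlim ip1 X x" "hlim ip3 Y y"
    unfolding op_closure_def by blast
  obtain W where W: "\<And>n. (X n, W n) \<in> A" "\<And>n. (W n, Y n) \<in> B"
    using XY(1) unfolding op_comp_iff by metis
  obtain w y' where w: "(x, w) \<in> A" "(w, y') \<in> B"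
    using dom unfolding op_dom_UNIV_iff op_comp_iff by blast
  have "hlim ip2 W w" by (rule hlim_of_op_bounded[OF lin bounded W(1) XY(2) w(1)])
  then have "(w, y) \<in> op_closure ip2 ip3 B" unfolding op_closure_def using W(2) XY(3) by blast
  moreover have "(w, y') \<in> op_closure ip2 ip3 B"
    using hspace2.subset_op_closure[of sc2 ip2 sc3 ip3] H2.hspace_axioms H3.hspace_axioms w(2)
    by (auto simp: hspace2_def)
  ultimately have "y = y'" using closable unfolding closable_def is_graph_def by blast
  then show "(x, y) \<in> op_comp B A" using w by (auto simp: op_comp_iff)
qed

lemma op_bounded_comp_closable:
  assumes "lin_op sc1 sc2 A" "op_bounded ip1 ip2 A"
    and "lin_op sc2 sc3 B" "closable ip2 ip3 B" "op_dom (op_comp B A) = UNIV"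
  shows "op_bounded ip1 ip3 (op_comp B A)"
proof (rule hspace2.closed_graph_theorem)
  show "hspace2 sc1 ip1 sc3 ip3" using H1.hspace_axioms H3.hspace_axioms by (simp add: hspace2_def)
  show "closed_op ip1 ip3 (op_comp B A)"
    using assms by (intro closed_op_comp) (simp_all add: lin_op_iff)
qed (use assms in \<open>simp_all add: lin_op_comp\<close>)

lemma op_bounded_comp:
  assumes "op_bounded ip1 ip2 A" "op_bounded ip2 ip3 B"
  shows "op_bounded ip1 ip3 (op_comp B A)"
proof -
  obtain KA where KA: "\<And>x y. (x, y) \<in> A \<Longrightarrow> H2.nm y \<le> KA * H1.nm x"
    using assms(1) unfolding op_bounded_def by blast
  obtain KB where KB: "\<And>x y. (x, y) \<in> B \<Longrightarrow> H3.nm y \<le> KB * H2.nm x"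
    using assms(2) unfolding op_bounded_def by blast
  have "H3.nm z \<le> (max KB 0 * KA) * H1.nm x" if "(x, y) \<in> A" "(y, z) \<in> B" for x y z
  proof -
    have "H3.nm z \<le> max KB 0 * H2.nm y"
      using KB[OF that(2)] by (smt (verit) H2.nm_nonneg mult_right_mono)
    also have "\<dots> \<le> max KB 0 * (KA * H1.nm x)" by (rule mult_left_mono[OF KA[OF that(1)]]) simp
    finally show ?thesis by (simp add: mult.assoc)
  qed
  then show ?thesis by (intro op_boundedI[where K = "max KB 0 * KA"]) (auto simp: op_comp_iff)
qed

end

section \<open>Boundary triples\<close>

locale boundary_triple = hspace2 scH ipH scG ipG
  for scH :: "complex \<Rightarrow> 'h::ab_group_add \<Rightarrow> 'h" and ipH
  and scG :: "complex \<Rightarrow> 'g::ab_group_add \<Rightarrow> 'g" and ipG +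
  fixes T Tt :: "('h \<times> 'h) set" and \<Gamma>0 \<Gamma>1 \<Gamma>t0 \<Gamma>t1 :: "'h \<Rightarrow> 'g"
  assumes T_lin: "lin_op scH scH T" and Tt_lin: "lin_op scH scH Tt"
    and \<Gamma>0_lin: "lin_on scH scG (op_dom T) \<Gamma>0" and \<Gamma>1_lin: "lin_on scH scG (op_dom T) \<Gamma>1"
    and \<Gamma>t0_lin: "lin_on scH scG (op_dom Tt) \<Gamma>t0"
    and green: "\<And>f u g v. (f, u) \<in> T \<Longrightarrow> (g, v) \<in> Tt \<Longrightarrow>
                 ipH u g - ipH f v = ipG (\<Gamma>1 f) (\<Gamma>t0 g) - ipG (\<Gamma>0 f) (\<Gamma>t1 g)"
    and \<Gamma>t0_dense: "hdense ipG (\<Gamma>t0 ` op_dom Tt)"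
    and adj_A0: "op_adj ipH ipH (ker_restr T \<Gamma>0) = ker_restr Tt \<Gamma>t0"
begin

abbreviation "A0 \<equiv> ker_restr T \<Gamma>0"
abbreviation "At0 \<equiv> ker_restr Tt \<Gamma>t0"
abbreviation "\<gamma> z \<equiv> gamma_field scH T \<Gamma>0 z"
abbreviation "\<gamma>t z \<equiv> gamma_field scH Tt \<Gamma>t0 z"
abbreviation "M z \<equiv> weyl scH T \<Gamma>0 \<Gamma>1 z"
abbreviation "R z \<equiv> op_inv (op_shift scH A0 z)"
abbreviation "\<rho> z \<equiv> z \<in> resolvent_set scH ipH A0"

lemma T_rel: "lin_rel scH scH T" and Tt_rel: "lin_rel scH scH Tt"
  using T_lin Tt_lin by (simp_all add: lin_op_iff)

lemmas \<Gamma>0_linear = lin_on_op_dom[OF H1.vs.vector_space_axioms H2.vs.vector_space_axioms T_rel \<Gamma>0_lin]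
lemmas \<Gamma>1_linear = lin_on_op_dom[OF H1.vs.vector_space_axioms H2.vs.vector_space_axioms T_rel \<Gamma>1_lin]
lemmas \<Gamma>t0_linear = lin_on_op_dom[OF H1.vs.vector_space_axioms H2.vs.vector_space_axioms Tt_rel \<Gamma>t0_lin]
lemmas T_diff = lin_rel_diff[OF H1.vs.vector_space_axioms H1.vs.vector_space_axioms T_rel]
lemmas Tt_diff = lin_rel_diff[OF H1.vs.vector_space_axioms H1.vs.vector_space_axioms Tt_rel]

lemma in_op_dom: "(f, u) \<in> A \<Longrightarrow> f \<in> op_dom A"
  by (auto simp: op_dom_iff)

lemma \<Gamma>_zero: "\<Gamma>0 0 = 0" "\<Gamma>1 0 = 0"
  by (fact \<Gamma>0_linear(4), fact \<Gamma>1_linear(4))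

lemma A0_iff: "(f, u) \<in> A0 \<longleftrightarrow> (f, u) \<in> T \<and> \<Gamma>0 f = 0"
  and At0_iff: "(f, u) \<in> At0 \<longleftrightarrow> (f, u) \<in> Tt \<and> \<Gamma>t0 f = 0"
  by (simp_all add: ker_restr_def op_restrict_def)

lemma \<gamma>_iff: "(a, f) \<in> \<gamma> z \<longleftrightarrow> (f, scH z f) \<in> T \<and> a = \<Gamma>0 f"
  and \<gamma>t_iff: "(a, f) \<in> \<gamma>t z \<longleftrightarrow> (f, scH z f) \<in> Tt \<and> a = \<Gamma>t0 f"
  by (auto simp: gamma_field_def)

lemma M_iff: "(a, b) \<in> M z \<longleftrightarrow> (\<exists>f. (f, scH z f) \<in> T \<and> a = \<Gamma>0 f \<and> b = \<Gamma>1 f)"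
  by (auto simp: weyl_def)

lemma R_iff: "(h, f) \<in> R z \<longleftrightarrow> (f, h + scH z f) \<in> A0"
  by (auto simp: op_inv_iff op_shift_iff)

lemma A0_rel: "lin_rel scH scH A0"
  unfolding lin_rel_def A0_iff
proof (intro conjI allI impI; (elim conjE)?)
  show "(0, 0) \<in> T" "\<Gamma>0 0 = 0" by (rule lin_rel_zero[OF T_rel], rule \<Gamma>_zero(1))
  fix x y u v assume "(x, y) \<in> T" "\<Gamma>0 x = 0" "(u, v) \<in> T" "\<Gamma>0 u = 0"
  then show "(x + u, y + v) \<in> T" "\<Gamma>0 (x + u) = 0"
    using lin_rel_add[OF T_rel] \<Gamma>0_linear(1)[OF in_op_dom in_op_dom] by simp_all
next
  fix c x y assume "(x, y) \<in> T" "\<Gamma>0 x = 0"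
  then show "(scH c x, scH c y) \<in> T" "\<Gamma>0 (scH c x) = 0"
    using lin_rel_scale[OF T_rel] \<Gamma>0_linear(2)[OF in_op_dom] by simp_all
qed

lemma eigen_add: "(f, scH z f) \<in> T \<Longrightarrow> (g, scH z g) \<in> T \<Longrightarrow> (f + g, scH z (f + g)) \<in> T"
  using lin_rel_add[OF T_rel] by (simp add: H1.vs.scale_right_distrib)

lemma eigen_scale: "(f, scH z f) \<in> T \<Longrightarrow> (scH c f, scH z (scH c f)) \<in> T"
  using lin_rel_scale[OF T_rel] by (metis H1.vs.scale_left_commute)

lemma eigen_diff: "(f, scH z f) \<in> T \<Longrightarrow> (g, scH z g) \<in> T \<Longrightarrow> (f - g, scH z (f - g)) \<in> T"
  using T_diff by (simp add: H1.vs.scale_right_diff_distrib)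

lemma M_rel: "lin_rel scG scG (M z)"
  unfolding lin_rel_def M_iff
proof (intro conjI allI impI; (elim conjE exE)?)
  show "\<exists>f. (f, scH z f) \<in> T \<and> 0 = \<Gamma>0 f \<and> 0 = \<Gamma>1 f"
    using lin_rel_zero[OF T_rel] \<Gamma>_zero by (intro exI[of _ 0]) auto
next
  fix x y u v f g assume "(f, scH z f) \<in> T" "x = \<Gamma>0 f" "y = \<Gamma>1 f" "(g, scH z g) \<in> T" "u = \<Gamma>0 g" "v = \<Gamma>1 g"
  then show "\<exists>f. (f, scH z f) \<in> T \<and> x + u = \<Gamma>0 f \<and> y + v = \<Gamma>1 f"
    using eigen_add \<Gamma>0_linear(1)[OF in_op_dom in_op_dom] \<Gamma>1_linear(1)[OF in_op_dom in_op_dom]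
    by (intro exI[of _ "f + g"]) simp
next
  fix c x y f assume "(f, scH z f) \<in> T" "x = \<Gamma>0 f" "y = \<Gamma>1 f"
  then show "\<exists>f. (f, scH z f) \<in> T \<and> scG c x = \<Gamma>0 f \<and> scG c y = \<Gamma>1 f"
    using eigen_scale \<Gamma>0_linear(2)[OF in_op_dom] \<Gamma>1_linear(2)[OF in_op_dom]
    by (intro exI[of _ "scH c f"]) simp
qed

lemma \<gamma>_rel: "lin_rel scG scH (\<gamma> z)"
  unfolding lin_rel_def \<gamma>_iff
  using eigen_add eigen_scale \<Gamma>0_linear(1)[OF in_op_dom in_op_dom] \<Gamma>0_linear(2)[OF in_op_dom]
    lin_rel_zero[OF T_rel] \<Gamma>_zero
  by (auto simp: H1.vs.scale_zero_right)

lemma R_exists: "\<rho> z \<Longrightarrow> \<exists>f. (f, h + scH z f) \<in> A0"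
  using resolvent_set_surj[of z scH ipH A0 h] by (metis add_diff_cancel diff_add_cancel)

lemma R_bounded: "\<rho> z \<Longrightarrow> \<exists>K. \<forall>f h. (f, h + scH z f) \<in> A0 \<longrightarrow> H1.nm f \<le> K * H1.nm h"
  using resolvent_set_bound[of z scH ipH A0] by (metis add_diff_cancel)

text \<open>This is dom T = ker \<Gamma>0 \<dotplus> ker (T - z).\<close>
lemma op_dom_T_decomposition:
  assumes z: "\<rho> z" and f: "(f, u) \<in> T"
  shows "\<exists>f0 g. (f0, (u - scH z f) + scH z f0) \<in> A0 \<and> (g, scH z g) \<in> T \<and> f = f0 + g"
proof -
  obtain f0 where f0: "(f0, (u - scH z f) + scH z f0) \<in> A0" using R_exists[OF z] by blast
  then have "(f - f0, u - ((u - scH z f) + scH z f0)) \<in> T"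
    by (intro T_diff[OF f]) (simp add: A0_iff)
  moreover have "u - ((u - scH z f) + scH z f0) = scH z (f - f0)"
    by (simp add: H1.vs.scale_right_diff_distrib)
  ultimately show ?thesis using f0 by (intro exI[of _ f0] exI[of _ "f - f0"]) auto
qed

lemma eigen_\<Gamma>0_inj: "\<rho> z \<Longrightarrow> (g, scH z g) \<in> T \<Longrightarrow> \<Gamma>0 g = 0 \<Longrightarrow> g = 0"
  using resolvent_set_inj[of z scH ipH A0 g "scH z g" 0 0] lin_rel_zero[OF A0_rel]
  by (simp add: A0_iff)

lemma ran_\<Gamma>0_eigen:
  assumes z: "\<rho> z" and a: "a \<in> \<Gamma>0 ` op_dom T"
  shows "\<exists>g. (g, scH z g) \<in> T \<and> a = \<Gamma>0 g"
proof -
  obtain f u where f: "(f, u) \<in> T" "a = \<Gamma>0 f" using a by (auto simp: op_dom_iff)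
  obtain f0 g where d: "(f0, (u - scH z f) + scH z f0) \<in> A0" "(g, scH z g) \<in> T" "f = f0 + g"
    using op_dom_T_decomposition[OF z f(1)] by blast
  have f0: "(f0, (u - scH z f) + scH z f0) \<in> T" "\<Gamma>0 f0 = 0" using d(1) by (simp_all add: A0_iff)
  have "\<Gamma>0 (f0 + g) = \<Gamma>0 f0 + \<Gamma>0 g"
    by (rule \<Gamma>0_linear(1)[OF in_op_dom[OF f0(1)] in_op_dom[OF d(2)]])
  then show ?thesis using d(2,3) f(2) f0(2) by auto
qed

lemma is_graph_\<gamma>: "\<rho> z \<Longrightarrow> is_graph (\<gamma> z)"
  unfolding is_graph_def \<gamma>_iff
proof (intro allI impI, elim conjE)
  fix a f g assume z: "\<rho> z" and h: "(f, scH z f) \<in> T" "a = \<Gamma>0 f" "(g, scH z g) \<in> T" "a = \<Gamma>0 g"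
  have "\<Gamma>0 (f - g) = 0" using h \<Gamma>0_linear(3)[OF in_op_dom in_op_dom] by simp
  then have "f - g = 0" using eigen_\<Gamma>0_inj[OF z eigen_diff[OF h(1,3)]] by blast
  then show "f = g" by simp
qed

lemma At0_shift_surj: "\<rho> z \<Longrightarrow> \<exists>g. (g, u + scH (cnj z) g) \<in> At0"
  using H1.adjoint_shift_surj[OF A0_rel] adj_A0 by simp

lemma \<Gamma>t0_eigen_dense:
  assumes z: "\<rho> z"
  shows "hdense ipG (\<Gamma>t0 ` {g. (g, scH (cnj z) g) \<in> Tt})"
proof -
  have "\<Gamma>t0 ` op_dom Tt \<subseteq> \<Gamma>t0 ` {g. (g, scH (cnj z) g) \<in> Tt}"
  proof
    fix a assume "a \<in> \<Gamma>t0 ` op_dom Tt"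
    then obtain g w where g: "(g, w) \<in> Tt" "a = \<Gamma>t0 g" by (auto simp: op_dom_iff)
    obtain g0 where g0: "(g0, (w - scH (cnj z) g) + scH (cnj z) g0) \<in> At0"
      using At0_shift_surj[OF z] by blast
    have "(g0, (w - scH (cnj z) g) + scH (cnj z) g0) \<in> Tt" using g0 by (simp add: At0_iff)
    then have "(g - g0, w - ((w - scH (cnj z) g) + scH (cnj z) g0)) \<in> Tt"
      by (rule Tt_diff[OF g(1)])
    moreover have "w - ((w - scH (cnj z) g) + scH (cnj z) g0) = scH (cnj z) (g - g0)"
      by (simp add: H1.vs.scale_right_diff_distrib)
    ultimately have "g - g0 \<in> {g. (g, scH (cnj z) g) \<in> Tt}" by simp
    moreover have "\<Gamma>t0 (g - g0) = \<Gamma>t0 g"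
      using \<Gamma>t0_linear(3)[OF in_op_dom[OF g(1)] in_op_dom[OF \<open>(g0, _) \<in> Tt\<close>]] g0
      by (simp add: At0_iff)
    ultimately show "a \<in> \<Gamma>t0 ` {g. (g, scH (cnj z) g) \<in> Tt}"
      using g(2) by (metis image_eqI)
  qed
  then show ?thesis by (rule hdense_mono[OF \<Gamma>t0_dense])
qed

sublocale GH: hspace2 scG ipG scH ipH
  by (simp add: hspace2_def H1.hspace_axioms H2.hspace_axioms)

lemma op_dom_\<gamma>t: "op_dom (\<gamma>t w) = \<Gamma>t0 ` {g. (g, scH w g) \<in> Tt}"
  unfolding set_eq_iff op_dom_iff \<gamma>t_iff image_iff by blast

lemma is_graph_adj_\<gamma>t: "\<rho> z \<Longrightarrow> is_graph (op_adj ipG ipH (\<gamma>t (cnj z)))"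
  by (rule GH.is_graph_op_adj) (simp add: op_dom_\<gamma>t \<Gamma>t0_eigen_dense)

lemma green_A0_eigen:
  assumes f0: "(f0, h + scH z f0) \<in> A0" and g: "(g, scH (cnj z) g) \<in> Tt"
  shows "ipH g h = ipG (\<Gamma>t0 g) (\<Gamma>1 f0)"
proof -
  have "ipH (h + scH z f0) g - ipH f0 (scH (cnj z) g) = ipG (\<Gamma>1 f0) (\<Gamma>t0 g) - ipG (\<Gamma>0 f0) (\<Gamma>t1 g)"
    using green f0 g by (auto simp: A0_iff)
  then have "ipH h g = ipG (\<Gamma>1 f0) (\<Gamma>t0 g)"
    using f0 by (simp add: A0_iff H1.ip_add_left H1.ip_scale_left H1.ip_scale_right)
  then show ?thesis using H1.ip_cnj_commute[of h g] H2.ip_cnj_commute[of "\<Gamma>1 f0" "\<Gamma>t0 g"] by simp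
qed

lemma green_eigen_At0:
  assumes g: "(g, scH z g) \<in> T" and gt: "(gt, k + scH (cnj z) gt) \<in> At0"
  shows "ipH g k = ipG (\<Gamma>0 g) (\<Gamma>t1 gt)"
proof -
  have "ipH (scH z g) gt - ipH g (k + scH (cnj z) gt) = ipG (\<Gamma>1 g) (\<Gamma>t0 gt) - ipG (\<Gamma>0 g) (\<Gamma>t1 gt)"
    using green g gt by (auto simp: At0_iff)
  then show ?thesis using gt
    by (simp add: At0_iff H1.ip_add_right H1.ip_scale_left H1.ip_scale_right)
qed

lemma \<Gamma>1_R_subset_adj_\<gamma>t: "op_comp (graph_on (op_dom T) \<Gamma>1) (R z) \<subseteq> op_adj ipG ipH (\<gamma>t (cnj z))"
  by (auto simp: op_comp_iff graph_on_iff R_iff op_adj_def \<gamma>t_iff green_A0_eigen)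

text \<open>By (G), \<gamma>(z) lies in the adjoint of the everywhere defined \<Gamma>t1 (At0 - cnj z)^-1.\<close>
lemma closable_\<gamma>:
  assumes z: "\<rho> z"
  shows "closable ipG ipH (\<gamma> z)"
proof (rule GH.closable_of_subset)
  let ?G = "op_comp (graph_on (op_dom Tt) \<Gamma>t1) (op_inv (op_shift scH At0 (cnj z)))"
  show "\<gamma> z \<subseteq> op_adj ipH ipG ?G"
  proof clarify
    fix a g assume "(a, g) \<in> \<gamma> z"
    then have g: "(g, scH z g) \<in> T" "a = \<Gamma>0 g" by (simp_all add: \<gamma>_iff)
    have "ipG b a = ipH k g" if kb: "(k, b) \<in> ?G" for k b
    proof -
      obtain gt where "(k, gt) \<in> op_inv (op_shift scH At0 (cnj z))"
        "(gt, b) \<in> graph_on (op_dom Tt) \<Gamma>t1"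
        using kb unfolding op_comp_iff by blast
      then obtain y where gt: "(gt, y) \<in> At0" "k = y - scH (cnj z) gt" "b = \<Gamma>t1 gt"
        by (auto simp: op_inv_iff op_shift_iff graph_on_iff)
      then have "(gt, k + scH (cnj z) gt) \<in> At0" by simp
      show ?thesis
        using green_eigen_At0[OF g(1) \<open>(gt, k + scH (cnj z) gt) \<in> At0\<close>] g(2) gt(3)
          H1.ip_cnj_commute[of g k] H2.ip_cnj_commute[of a b] by simp
    qed
    then show "(a, g) \<in> op_adj ipH ipG ?G" by (auto simp: op_adj_def)
  qed
  have "op_dom ?G = UNIV"
  proof (unfold op_dom_UNIV_iff, intro allI)
    fix k
    obtain gt where gt: "(gt, k + scH (cnj z) gt) \<in> At0" using At0_shift_surj[OF z] by blast
    then have "(k, gt) \<in> op_inv (op_shift scH At0 (cnj z))" by (force simp: op_inv_iff op_shift_iff)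
    moreover have "(gt, \<Gamma>t1 gt) \<in> graph_on (op_dom Tt) \<Gamma>t1"
      using gt by (auto simp: graph_on_iff At0_iff op_dom_iff)
    ultimately show "\<exists>b. (k, b) \<in> ?G" by (auto simp: op_comp_iff)
  qed
  then show "is_graph (op_adj ipH ipG ?G)"
    by (intro is_graph_op_adj) (simp add: H1.hdense_UNIV)
qed (rule closed_op_adj)

end

locale boundary_triple_ext = boundary_triple scH ipH scG ipG T Tt \<Gamma>0 \<Gamma>1 \<Gamma>t0 \<Gamma>t1
  for scH :: "complex \<Rightarrow> 'h::ab_group_add \<Rightarrow> 'h" and ipH
  and scG :: "complex \<Rightarrow> 'g::ab_group_add \<Rightarrow> 'g" and ipG and T Tt \<Gamma>0 \<Gamma>1 \<Gamma>t0 \<Gamma>t1 +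
  fixes B1 B2 :: "('g \<times> 'g) set"
  assumes B1_lin: "lin_op scG scG B1" and B2_lin: "lin_op scG scG B2"
    and \<Gamma>1_A0_dom: "\<Gamma>1 ` op_dom A0 \<subseteq> op_dom (op_comp B1 B2)"
begin

abbreviation "AB \<equiv> ext_B T \<Gamma>0 \<Gamma>1 B1 B2"
abbreviation "BMB z \<equiv> op_comp B2 (op_comp (M z) B1)"

lemma B1_rel: "lin_rel scG scG B1" and B2_rel: "lin_rel scG scG B2"
  and B1_graph: "is_graph B1" and B2_graph: "is_graph B2"
  using B1_lin B2_lin by (simp_all add: lin_op_iff)

lemma AB_iff: "(f, u) \<in> AB \<longleftrightarrow> (f, u) \<in> T \<and> (\<Gamma>1 f, \<Gamma>0 f) \<in> op_comp B1 B2"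
  by (simp add: ext_B_def)

lemma AB_rel: "lin_rel scH scH AB"
  unfolding lin_rel_def AB_iff
proof (intro conjI allI impI; (elim conjE)?)
  have "lin_rel scG scG (op_comp B1 B2)" by (rule lin_rel_comp[OF B1_rel B2_rel])
  note BB = lin_rel_zero[OF this] lin_rel_add[OF this] lin_rel_scale[OF this]
  show "(0, 0) \<in> T" by (rule lin_rel_zero[OF T_rel])
  show "(\<Gamma>1 0, \<Gamma>0 0) \<in> op_comp B1 B2" using \<Gamma>_zero BB(1) by simp
  fix x y u v assume xy: "(x, y) \<in> T" "(\<Gamma>1 x, \<Gamma>0 x) \<in> op_comp B1 B2"
    and uv: "(u, v) \<in> T" "(\<Gamma>1 u, \<Gamma>0 u) \<in> op_comp B1 B2"
  show "(x + u, y + v) \<in> T" using lin_rel_add[OF T_rel xy(1) uv(1)] .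
  show "(\<Gamma>1 (x + u), \<Gamma>0 (x + u)) \<in> op_comp B1 B2"
    using BB(2)[OF xy(2) uv(2)] \<Gamma>0_linear(1)[OF in_op_dom[OF xy(1)] in_op_dom[OF uv(1)]]
      \<Gamma>1_linear(1)[OF in_op_dom[OF xy(1)] in_op_dom[OF uv(1)]] by simp
next
  have "lin_rel scG scG (op_comp B1 B2)" by (rule lin_rel_comp[OF B1_rel B2_rel])
  note BB = lin_rel_scale[OF this]
  fix c x y assume xy: "(x, y) \<in> T" "(\<Gamma>1 x, \<Gamma>0 x) \<in> op_comp B1 B2"
  show "(scH c x, scH c y) \<in> T" using lin_rel_scale[OF T_rel xy(1)] .
  show "(\<Gamma>1 (scH c x), \<Gamma>0 (scH c x)) \<in> op_comp B1 B2"
    using BB[OF xy(2)] \<Gamma>0_linear(2)[OF in_op_dom[OF xy(1)]] \<Gamma>1_linear(2)[OF in_op_dom[OF xy(1)]]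
    by simp
qed

lemma B1B2_\<Gamma>1_A0: "(f0, u0) \<in> A0 \<Longrightarrow> \<exists>\<psi> a. (\<Gamma>1 f0, \<psi>) \<in> B2 \<and> (\<psi>, a) \<in> B1"
  using \<Gamma>1_A0_dom by (force simp: op_dom_iff op_comp_iff)

text \<open>A fixed point of B2 M(z) B1 is the boundary value of an eigenvector of A_{B1 B2}.\<close>
lemma BMB_fixed_point:
  assumes zB: "z \<in> resolvent_set scH ipH AB" and d: "(d, d) \<in> BMB z"
  shows "d = 0"
proof -
  obtain a b where ab: "(d, a) \<in> B1" "(a, b) \<in> M z" "(b, d) \<in> B2"
    using d by (auto simp: op_comp_iff)
  then obtain g where g: "(g, scH z g) \<in> T" "a = \<Gamma>0 g" "b = \<Gamma>1 g" by (auto simp: M_iff)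
  have "(g, scH z g) \<in> AB" using g ab by (auto simp: AB_iff op_comp_iff)
  then have "g = 0"
    using resolvent_set_inj[OF zB _ lin_rel_zero[OF AB_rel], of g "scH z g"] by simp
  then have "b = 0" using g \<Gamma>_zero by simp
  then show ?thesis using ab(3) lin_rel_zero[OF B2_rel] B2_graph unfolding is_graph_def by blast
qed

lemma is_graph_inv_I_minus_BMB:
  "z \<in> resolvent_set scH ipH AB \<Longrightarrow> is_graph (op_inv (op_I_minus (BMB z)))"
  by (rule is_graph_inv_I_minus[OF H2.vs.vector_space_axioms
        lin_rel_comp[OF B2_rel lin_rel_comp[OF M_rel B1_rel]] BMB_fixed_point])

text \<open>For f in dom A_{B1 B2} with (A_{B1 B2} - z) f = h, split f = R(z) h + g with g an
  eigenvector; then B2 \<Gamma>1 R(z) h = \<psi> and \<phi> - \<psi> = B2 M(z) B1 \<phi> for \<phi> = B2 \<Gamma>1 f.\<close>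
lemma resolvent_formula_mem:
  assumes z: "\<rho> z" and fu: "(f, u) \<in> AB"
  shows "(u - scH z f, f) \<in> op_plus (R z) (op_comp (\<gamma> z) (op_comp B1
           (op_comp (op_inv (op_I_minus (BMB z))) (op_comp B2 (op_adj ipG ipH (\<gamma>t (cnj z)))))))"
proof -
  define h where "h = u - scH z f"
  have fT: "(f, u) \<in> T" and "(\<Gamma>1 f, \<Gamma>0 f) \<in> op_comp B1 B2" using fu by (simp_all add: AB_iff)
  then obtain \<phi> where \<phi>: "(\<Gamma>1 f, \<phi>) \<in> B2" "(\<phi>, \<Gamma>0 f) \<in> B1" by (auto simp: op_comp_iff)
  obtain f0 where f0: "(f0, h + scH z f0) \<in> A0" using R_exists[OF z] by blast
  have f0T: "(f0, h + scH z f0) \<in> T" "\<Gamma>0 f0 = 0" using f0 by (simp_all add: A0_iff)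
  define g where "g = f - f0"
  have "(g, u - (h + scH z f0)) \<in> T" unfolding g_def by (rule T_diff[OF fT f0T(1)])
  moreover have "u - (h + scH z f0) = scH z g"
    by (simp add: h_def g_def H1.vs.scale_right_diff_distrib)
  ultimately have g: "(g, scH z g) \<in> T" by simp
  have \<Gamma>g: "\<Gamma>0 g = \<Gamma>0 f" "\<Gamma>1 g = \<Gamma>1 f - \<Gamma>1 f0"
    using \<Gamma>0_linear(3) \<Gamma>1_linear(3) in_op_dom[OF fT] in_op_dom[OF f0T(1)] f0T(2)
    by (simp_all add: g_def)
  obtain \<psi> where \<psi>: "(\<Gamma>1 f0, \<psi>) \<in> B2" using B1B2_\<Gamma>1_A0[OF f0] by blast
  have "(\<Gamma>1 g, \<phi> - \<psi>) \<in> B2"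
    unfolding \<Gamma>g by (rule lin_rel_diff[OF H2.vs.vector_space_axioms H2.vs.vector_space_axioms B2_rel \<phi>(1) \<psi>])
  moreover have "(\<Gamma>0 f, \<Gamma>1 g) \<in> M z" using g \<Gamma>g by (auto simp: M_iff)
  ultimately have "(\<phi>, \<phi> - \<psi>) \<in> BMB z" using \<phi>(2) by (auto simp: op_comp_iff)
  then have "(\<psi>, \<phi>) \<in> op_inv (op_I_minus (BMB z))" by (auto simp: op_inv_iff op_I_minus_iff)
  moreover have "(h, \<Gamma>1 f0) \<in> op_adj ipG ipH (\<gamma>t (cnj z))"
    using f0 by (auto simp: op_adj_def \<gamma>t_iff green_A0_eigen)
  moreover have "(\<Gamma>0 f, g) \<in> \<gamma> z" using g \<Gamma>g by (simp add: \<gamma>_iff)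
  moreover have "(h, f0) \<in> R z" using f0 by (simp add: R_iff)
  ultimately show ?thesis
    using \<psi> \<phi>(2) unfolding h_def[symmetric] op_plus_iff op_comp_iff g_def by force
qed

theorem resolvent_formula:
  assumes z: "\<rho> z" and zB: "z \<in> resolvent_set scH ipH AB"
  shows "op_inv (op_shift scH AB z) = op_plus (R z) (op_comp (\<gamma> z) (op_comp B1
           (op_comp (op_inv (op_I_minus (BMB z))) (op_comp B2 (op_adj ipG ipH (\<gamma>t (cnj z)))))))"
proof (rule graph_eq_of_subset)
  show "op_inv (op_shift scH AB z) \<subseteq> op_plus (R z) (op_comp (\<gamma> z) (op_comp B1
           (op_comp (op_inv (op_I_minus (BMB z))) (op_comp B2 (op_adj ipG ipH (\<gamma>t (cnj z)))))))"
    using resolvent_formula_mem[OF z] by (auto simp: op_inv_iff op_shift_iff)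
  show "is_graph (op_plus (R z) (op_comp (\<gamma> z) (op_comp B1
           (op_comp (op_inv (op_I_minus (BMB z))) (op_comp B2 (op_adj ipG ipH (\<gamma>t (cnj z))))))))"
    by (intro is_graph_plus is_graph_comp resolvent_is_graph[OF z] is_graph_\<gamma>[OF z] B1_graph
        B2_graph is_graph_inv_I_minus_BMB[OF zB] is_graph_adj_\<gamma>t[OF z])
qed (rule resolvent_dom[OF zB])

end

locale ext_conditions = boundary_triple_ext scH ipH scG ipG T Tt \<Gamma>0 \<Gamma>1 \<Gamma>t0 \<Gamma>t1 B1 B2
  for scH :: "complex \<Rightarrow> 'h::ab_group_add \<Rightarrow> 'h" and ipH
  and scG :: "complex \<Rightarrow> 'g::ab_group_add \<Rightarrow> 'g" and ipG and T Tt \<Gamma>0 \<Gamma>1 \<Gamma>t0 \<Gamma>t1 B1 B2 +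
  fixes z0 :: complex
  assumes B1_closable: "closable ipG ipG B1" and B2_closable: "closable ipG ipG B2"
    and z0: "z0 \<in> resolvent_set scH ipH (ker_restr T \<Gamma>0)"
    and MB1_closable: "closable ipG ipG (op_comp (weyl scH T \<Gamma>0 \<Gamma>1 z0) B1)"
    and cond_i: "1 \<in> resolvent_set scG ipG
                   (op_comp B2 (op_closure ipG ipG (op_comp (weyl scH T \<Gamma>0 \<Gamma>1 z0) B1)))"
    and cond_ii: "op_ran (op_comp B2 (op_closure ipG ipG (op_comp (weyl scH T \<Gamma>0 \<Gamma>1 z0) B1)))
                   \<subseteq> \<Gamma>0 ` op_dom T \<inter> op_dom B1"
    and cond_iii: "op_ran (op_restrict B1 (\<Gamma>0 ` op_dom T)) \<subseteq> \<Gamma>0 ` op_dom T"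
    and cond_iv: "op_ran (op_restrict B2 (\<Gamma>1 ` op_dom T)) \<subseteq> \<Gamma>0 ` op_dom T"
begin

abbreviation "C \<equiv> op_comp B2 (op_closure ipG ipG (op_comp (M z0) B1))"

sublocale GG: hspace2 scG ipG scG ipG
  by (simp add: hspace2_def H2.hspace_axioms)

sublocale HGG: hspace3 scH ipH scG ipG scG ipG
  by (simp add: hspace3_def hspace2_def H1.hspace_axioms H2.hspace_axioms)

sublocale HGH: hspace3 scH ipH scG ipG scH ipH
  by (simp add: hspace3_def hspace2_def H1.hspace_axioms H2.hspace_axioms)

lemma C_rel: "lin_rel scG scG C"
  by (rule lin_rel_comp[OF B2_rel GG.lin_rel_closure[OF lin_rel_comp[OF M_rel B1_rel]]])

lemma \<Gamma>1_eigen_in_C: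
  assumes "(\<phi>, \<Gamma>0 g) \<in> B1" "(g, scH z0 g) \<in> T"
  shows "(\<phi>, \<Gamma>1 g) \<in> op_closure ipG ipG (op_comp (M z0) B1)"
proof -
  have "(\<Gamma>0 g, \<Gamma>1 g) \<in> M z0" using assms(2) by (auto simp: M_iff)
  then show ?thesis using assms(1) by (rule subsetD[OF GG.subset_op_closure, OF op_compI[rotated]])
qed

lemma AB_shift_z0_inj:
  assumes "(f, u) \<in> AB" "(f', u') \<in> AB" "u - scH z0 f = u' - scH z0 f'"
  shows "f = f'"
proof -
  define e where "e = f - f'"
  have "(e, u - u') \<in> AB"
    unfolding e_def by (rule lin_rel_diff[OF H1.vs.vector_space_axioms H1.vs.vector_space_axioms AB_rel assms(1,2)])
  moreover have "u - u' = scH z0 e"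
    using assms(3) by (simp add: e_def H1.vs.scale_right_diff_distrib algebra_simps)
  ultimately have eT: "(e, scH z0 e) \<in> T" and "(\<Gamma>1 e, \<Gamma>0 e) \<in> op_comp B1 B2"
    by (simp_all add: AB_iff)
  then obtain \<phi> where \<phi>: "(\<Gamma>1 e, \<phi>) \<in> B2" "(\<phi>, \<Gamma>0 e) \<in> B1" by (auto simp: op_comp_iff)
  have "(\<phi>, \<phi>) \<in> C" using \<Gamma>1_eigen_in_C[OF \<phi>(2) eT] \<phi>(1) by (auto simp: op_comp_iff)
  then have "\<phi> = 0" using resolvent_set_inj[OF cond_i _ lin_rel_zero[OF C_rel], of \<phi> \<phi>] by simp
  then have "\<Gamma>0 e = 0" using \<phi>(2) lin_rel_zero[OF B1_rel] B1_graph unfolding is_graph_def by blast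
  then show ?thesis using eigen_\<Gamma>0_inj[OF z0 eT] by (simp add: e_def)
qed

lemma ran_\<Gamma>0_add:
  assumes "a \<in> \<Gamma>0 ` op_dom T" "b \<in> \<Gamma>0 ` op_dom T"
  shows "a + b \<in> \<Gamma>0 ` op_dom T"
proof -
  obtain f g where fg: "f \<in> op_dom T" "g \<in> op_dom T" "a = \<Gamma>0 f" "b = \<Gamma>0 g" using assms by blast
  then obtain u v where "(f, u) \<in> T" "(g, v) \<in> T" by (auto simp: op_dom_iff)
  then have "f + g \<in> op_dom T" by (intro in_op_dom[OF lin_rel_add[OF T_rel]])
  moreover have "a + b = \<Gamma>0 (f + g)" using \<Gamma>0_linear(1)[OF fg(1,2)] fg(3,4) by simp
  ultimately show ?thesis by (rule image_eqI[rotated])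
qed

text \<open>Conditions (i)-(iv) produce the boundary data of the solution of (A_{B1 B2} - z0) f = h:
  \<phi> solves (I - C) \<phi> = \<psi>, and (ii)-(iv) put B1 \<phi> into ran \<Gamma>0, where it is matched
  by an eigenvector g of T.\<close>
lemma boundary_solution:
  assumes \<psi>: "(\<Gamma>1 f0, \<psi>) \<in> B2" "(\<psi>, a1) \<in> B1" and f0: "f0 \<in> op_dom T"
  shows "\<exists>\<phi> g. (\<phi>, \<phi> - \<psi>) \<in> C \<and> (\<phi>, \<Gamma>0 g) \<in> B1 \<and> (g, scH z0 g) \<in> T \<and> (\<Gamma>1 g, \<phi> - \<psi>) \<in> B2"
proof -
  obtain \<phi> y where "(\<phi>, y) \<in> C" "- \<psi> = y - scG 1 \<phi>" using resolvent_set_surj[OF cond_i] by blast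
  then have \<phi>: "(\<phi>, \<phi> - \<psi>) \<in> C" by (simp add: algebra_simps)
  then have "\<phi> - \<psi> \<in> op_ran C" by (auto simp: op_ran_iff)
  then have "\<phi> - \<psi> \<in> \<Gamma>0 ` op_dom T \<inter> op_dom B1" using cond_ii by blast
  then obtain a2 where a2: "(\<phi> - \<psi>, a2) \<in> B1" and "\<phi> - \<psi> \<in> \<Gamma>0 ` op_dom T"
    by (auto simp: op_dom_iff)
  then have "a2 \<in> \<Gamma>0 ` op_dom T" using cond_iii by (force simp: op_ran_iff op_restrict_def)
  moreover have "a1 \<in> \<Gamma>0 ` op_dom T"
  proof -
    have "\<psi> \<in> \<Gamma>0 ` op_dom T" using cond_iv \<psi>(1) f0 by (force simp: op_ran_iff op_restrict_def)
    then show ?thesis using cond_iii \<psi>(2) by (force simp: op_ran_iff op_restrict_def)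
  qed
  ultimately obtain g where g: "(g, scH z0 g) \<in> T" "a1 + a2 = \<Gamma>0 g"
    using ran_\<Gamma>0_eigen[OF z0] ran_\<Gamma>0_add by blast
  have \<phi>B1: "(\<phi>, \<Gamma>0 g) \<in> B1" using lin_rel_add[OF B1_rel \<psi>(2) a2] g(2) by simp
  obtain w where w: "(\<phi>, w) \<in> op_closure ipG ipG (op_comp (M z0) B1)" "(w, \<phi> - \<psi>) \<in> B2"
    using \<phi> by (auto simp: op_comp_iff)
  have "w = \<Gamma>1 g"
    using MB1_closable \<Gamma>1_eigen_in_C[OF \<phi>B1 g(1)] w(1) unfolding closable_def is_graph_def by blast
  then show ?thesis using \<phi> \<phi>B1 g(1) w(2) by blast
qed

abbreviation "X \<equiv> op_comp (graph_on (op_dom T) \<Gamma>1) (R z0)"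
abbreviation "Q \<equiv> op_comp (\<gamma> z0) (op_comp B1 (op_comp (op_inv (op_I_minus C)) (op_comp B2 X)))"

lemma AB_shift_z0_solution: "\<exists>f0 g. (h, f0) \<in> R z0 \<and> (h, g) \<in> Q \<and> (f0 + g, h + scH z0 (f0 + g)) \<in> AB"
proof -
  obtain f0 where f0: "(f0, h + scH z0 f0) \<in> A0" using R_exists[OF z0] by blast
  have f0T: "(f0, h + scH z0 f0) \<in> T" "\<Gamma>0 f0 = 0" using f0 by (simp_all add: A0_iff)
  obtain \<psi> a1 where \<psi>: "(\<Gamma>1 f0, \<psi>) \<in> B2" "(\<psi>, a1) \<in> B1" using B1B2_\<Gamma>1_A0[OF f0] by blast
  obtain \<phi> g where \<phi>: "(\<phi>, \<phi> - \<psi>) \<in> C" "(\<phi>, \<Gamma>0 g) \<in> B1" and g: "(g, scH z0 g) \<in> T"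
    and g2: "(\<Gamma>1 g, \<phi> - \<psi>) \<in> B2"
    using boundary_solution[OF \<psi> in_op_dom[OF f0T(1)]] by blast
  have "(h, f0) \<in> R z0" using f0 by (simp add: R_iff)
  moreover have "(h, g) \<in> Q"
  proof -
    have "(h, \<Gamma>1 f0) \<in> X"
      using f0 in_op_dom[OF f0T(1)] by (auto simp: op_comp_iff graph_on_iff R_iff)
    moreover have "(\<psi>, \<phi>) \<in> op_inv (op_I_minus C)"
      using \<phi>(1) by (auto simp: op_inv_iff op_I_minus_iff)
    moreover have "(\<Gamma>0 g, g) \<in> \<gamma> z0" using g by (simp add: \<gamma>_iff)
    ultimately show ?thesis using \<psi>(1) \<phi>(2) by (blast intro: op_compI)
  qed
  moreover have "(f0 + g, h + scH z0 (f0 + g)) \<in> AB"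
  proof -
    have "(f0 + g, (h + scH z0 f0) + scH z0 g) \<in> T" by (rule lin_rel_add[OF T_rel f0T(1) g])
    then have T1: "(f0 + g, h + scH z0 (f0 + g)) \<in> T"
      by (simp add: H1.vs.scale_right_distrib add.assoc)
    have "\<Gamma>0 (f0 + g) = \<Gamma>0 g" "\<Gamma>1 (f0 + g) = \<Gamma>1 f0 + \<Gamma>1 g"
      using \<Gamma>0_linear(1) \<Gamma>1_linear(1) in_op_dom[OF f0T(1)] in_op_dom[OF g] f0T(2) by simp_all
    moreover have "(\<Gamma>1 f0 + \<Gamma>1 g, \<psi> + (\<phi> - \<psi>)) \<in> B2" by (rule lin_rel_add[OF B2_rel \<psi>(1) g2])
    ultimately show ?thesis using T1 \<phi>(2) by (auto simp: AB_iff op_comp_iff)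
  qed
  ultimately show ?thesis by blast
qed

lemma X_lin_op: "lin_op scH scG X"
proof (rule lin_op_comp)
  show "lin_op scH scG (graph_on (op_dom T) \<Gamma>1)"
    by (simp add: lin_op_iff is_graph_graph_on
        lin_rel_graph_on[OF H1.vs.vector_space_axioms H2.vs.vector_space_axioms T_rel \<Gamma>1_lin])
  show "lin_op scH scH (R z0)"
    using resolvent_is_graph[OF z0] lin_rel_inv[OF lin_rel_shift[OF H1.vs.vector_space_axioms A0_rel]]
    by (simp add: lin_op_iff)
qed

lemma Q_dom: "op_dom Q = UNIV"
  using AB_shift_z0_solution by (auto simp: op_dom_UNIV_iff)

lemmas Q_inner_dom = op_dom_comp_UNIV[OF Q_dom] op_dom_comp_UNIV[OF op_dom_comp_UNIV[OF Q_dom]]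
  op_dom_comp_UNIV[OF op_dom_comp_UNIV[OF op_dom_comp_UNIV[OF Q_dom]]]
  op_dom_comp_UNIV[OF op_dom_comp_UNIV[OF op_dom_comp_UNIV[OF op_dom_comp_UNIV[OF Q_dom]]]]

text \<open>\<Gamma>1 R(z0) is everywhere defined and contained in the closed operator
  \<gamma>t(cnj z0)*, so it equals it and is bounded by the closed graph theorem.\<close>
lemma X_bounded: "op_bounded ipH ipG X"
proof (rule closed_graph_theorem[OF X_lin_op Q_inner_dom(4)])
  have "X = op_adj ipG ipH (\<gamma>t (cnj z0))"
    by (rule graph_eq_of_subset[OF \<Gamma>1_R_subset_adj_\<gamma>t is_graph_adj_\<gamma>t[OF z0] Q_inner_dom(4)])
  then show "closed_op ipH ipG X" using GH.closed_op_adj by simp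
qed

lemma Q_bounded: "op_bounded ipH ipH Q"
proof -
  have inv_lin: "lin_op scG scG (op_inv (op_I_minus C))"
    using H2.I_minus_inv_lin_op(1)[OF cond_i]
      lin_rel_inv[OF lin_rel_I_minus[OF H2.vs.vector_space_axioms C_rel]]
    by (simp add: lin_op_iff)
  have Y_lin: "lin_op scH scG (op_comp B2 X)" by (rule lin_op_comp[OF B2_lin X_lin_op])
  have Y: "op_bounded ipH ipG (op_comp B2 X)"
    by (rule HGG.op_bounded_comp_closable[OF X_lin_op X_bounded B2_lin B2_closable Q_inner_dom(3)])
  have \<Phi>_lin: "lin_op scH scG (op_comp (op_inv (op_I_minus C)) (op_comp B2 X))"
    by (rule lin_op_comp[OF inv_lin Y_lin])
  have \<Phi>: "op_bounded ipH ipG (op_comp (op_inv (op_I_minus C)) (op_comp B2 X))"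
    by (rule HGG.op_bounded_comp[OF Y H2.I_minus_inv_lin_op(3)[OF cond_i]])
  have Z: "op_bounded ipH ipG (op_comp B1 (op_comp (op_inv (op_I_minus C)) (op_comp B2 X)))"
    by (rule HGG.op_bounded_comp_closable[OF \<Phi>_lin \<Phi> B1_lin B1_closable Q_inner_dom(1)])
  have \<gamma>_lin: "lin_op scG scH (\<gamma> z0)" by (simp add: lin_op_iff \<gamma>_rel is_graph_\<gamma>[OF z0])
  show ?thesis
    by (rule HGH.op_bounded_comp_closable[OF lin_op_comp[OF B1_lin \<Phi>_lin] Z \<gamma>_lin
          closable_\<gamma>[OF z0] Q_dom])
qed

theorem z0_in_resolvent_AB: "z0 \<in> resolvent_set scH ipH AB"
proof -
  obtain KQ where KQ: "\<And>x y. (x, y) \<in> Q \<Longrightarrow> H1.nm y \<le> KQ * H1.nm x"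
    using Q_bounded unfolding op_bounded_def by blast
  obtain K0 where K0: "\<And>f h. (f, h + scH z0 f) \<in> A0 \<Longrightarrow> H1.nm f \<le> K0 * H1.nm h"
    using R_bounded[OF z0] by blast
  show ?thesis
  proof (rule resolvent_setI)
    show "x = x'" if "(x, y) \<in> AB" "(x', y') \<in> AB" "y - scH z0 x = y' - scH z0 x'" for x y x' y'
      using AB_shift_z0_inj[OF that] .
    show "\<exists>x y. (x, y) \<in> AB \<and> h = y - scH z0 x" for h
      using AB_shift_z0_solution[of h] by force
    show "H1.nm x \<le> (K0 + KQ) * H1.nm (y - scH z0 x)" if xy: "(x, y) \<in> AB" for x y
    proof -
      define h where "h = y - scH z0 x"
      obtain f0 g where fg: "(h, f0) \<in> R z0" "(h, g) \<in> Q" "(f0 + g, h + scH z0 (f0 + g)) \<in> AB"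
        using AB_shift_z0_solution[of h] by blast
      have "x = f0 + g" by (rule AB_shift_z0_inj[OF xy fg(3)]) (simp add: h_def)
      then have "H1.nm x \<le> H1.nm f0 + H1.nm g" using H1.nm_triangle by simp
      also have "\<dots> \<le> K0 * H1.nm h + KQ * H1.nm h"
        using K0[of f0 h] KQ[OF fg(2)] fg(1) by (simp add: R_iff add_mono)
      finally show ?thesis by (simp add: h_def algebra_simps)
    qed
  qed
qed

end

theorem theorem4p7:
  fixes scH :: "complex \<Rightarrow> 'h::ab_group_add \<Rightarrow> 'h" and ipH :: "'h \<Rightarrow> 'h \<Rightarrow> complex"
    and scG :: "complex \<Rightarrow> 'g::ab_group_add \<Rightarrow> 'g" and ipG :: "'g \<Rightarrow> 'g \<Rightarrow> complex"
    and S St T Tt :: "('h \<times> 'h) set"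
    and \<Gamma>0 \<Gamma>1 \<Gamma>t0 \<Gamma>t1 :: "'h \<Rightarrow> 'g"
    and B1 B2 :: "('g \<times> 'g) set"
    and z0 :: complex
  defines "A0 \<equiv> ker_restr T \<Gamma>0"
      and "At0 \<equiv> ker_restr Tt \<Gamma>t0"
      and "AB \<equiv> ext_B T \<Gamma>0 \<Gamma>1 B1 B2"
  assumes hilbH: "hilbert_space scH ipH" and sepH: "separable ipH"
      and hilbG: "hilbert_space scG ipG"
      \<comment> \<open>adjoint pair {S, St}\<close>
      and S_op: "lin_op scH scH S" "closed_op ipH ipH S" "densely_defined ipH S"
      and St_op: "lin_op scH scH St" "closed_op ipH ipH St" "densely_defined ipH St"
      and adj_pair: "\<forall>f u g v. (f, u) \<in> S \<longrightarrow> (g, v) \<in> St \<longrightarrow> ipH u g = ipH f v"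
      \<comment> \<open>cores T of S*, Tt of St*\<close>
      and T_op: "lin_op scH scH T" "T \<subseteq> op_adj ipH ipH S" "op_closure ipH ipH T = op_adj ipH ipH S"
      and Tt_op: "lin_op scH scH Tt" "Tt \<subseteq> op_adj ipH ipH St" "op_closure ipH ipH Tt = op_adj ipH ipH St"
      \<comment> \<open>linear boundary maps\<close>
      and lin_\<Gamma>: "lin_on scH scG (op_dom T) \<Gamma>0" "lin_on scH scG (op_dom T) \<Gamma>1"
      and lin_\<Gamma>t: "lin_on scH scG (op_dom Tt) \<Gamma>t0" "lin_on scH scG (op_dom Tt) \<Gamma>t1"
      \<comment> \<open>(G)\<close>
      and G: "\<forall>f u g v. (f, u) \<in> T \<longrightarrow> (g, v) \<in> Tt \<longrightarrow>
                 ipH u g - ipH f v = ipG (\<Gamma>1 f) (\<Gamma>t0 g) - ipG (\<Gamma>0 f) (\<Gamma>t1 g)"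
      \<comment> \<open>(D)\<close>
      and D: "hdense ipG (\<Gamma>0 ` op_dom T)" "hdense ipG (\<Gamma>t0 ` op_dom Tt)"
      \<comment> \<open>(M)\<close>
      and M: "op_adj ipH ipH A0 = At0" "op_adj ipH ipH At0 = A0"
      and rho_ne: "resolvent_set scH ipH A0 \<noteq> {}"
      and B_op: "lin_op scG scG B1" "closable ipG ipG B1" "lin_op scG scG B2" "closable ipG ipG B2"
      and z0: "z0 \<in> resolvent_set scH ipH A0"
      and MB1_closable: "closable ipG ipG (op_comp (weyl scH T \<Gamma>0 \<Gamma>1 z0) B1)"
      and i: "1 \<in> resolvent_set scG ipG
                (op_comp B2 (op_closure ipG ipG (op_comp (weyl scH T \<Gamma>0 \<Gamma>1 z0) B1)))"
      and ii: "op_ran (op_comp B2 (op_closure ipG ipG (op_comp (weyl scH T \<Gamma>0 \<Gamma>1 z0) B1)))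
                 \<subseteq> \<Gamma>0 ` op_dom T \<inter> op_dom B1"
      and iii: "op_ran (op_restrict B1 (\<Gamma>0 ` op_dom T)) \<subseteq> \<Gamma>0 ` op_dom T"
      and iv: "op_ran (op_restrict B2 (\<Gamma>1 ` op_dom T)) \<subseteq> \<Gamma>0 ` op_dom T"
      and v: "\<Gamma>1 ` op_dom A0 \<subseteq> op_dom (op_comp B1 B2)"
  shows "closed_op ipH ipH AB \<and> z0 \<in> resolvent_set scH ipH AB \<and>
    (\<forall>z \<in> resolvent_set scH ipH A0 \<inter> resolvent_set scH ipH AB.
       op_inv (op_shift scH AB z) =
       op_plus (op_inv (op_shift scH A0 z))
         (op_comp (gamma_field scH T \<Gamma>0 z)
           (op_comp B1
             (op_comp (op_inv (op_I_minus (op_comp B2 (op_comp (weyl scH T \<Gamma>0 \<Gamma>1 z) B1))))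
               (op_comp B2 (op_adj ipG ipH (gamma_field scH Tt \<Gamma>t0 (cnj z))))))))"
proof -
  interpret ext_conditions scH ipH scG ipG T Tt \<Gamma>0 \<Gamma>1 \<Gamma>t0 \<Gamma>t1 B1 B2 z0
    unfolding ext_conditions_def ext_conditions_axioms_def boundary_triple_ext_def
      boundary_triple_ext_axioms_def boundary_triple_def boundary_triple_axioms_def hspace2_def hspace_def
    using hilbH hilbG T_op(1) Tt_op(1) lin_\<Gamma> lin_\<Gamma>t(1) G D(2) M(1)[unfolded A0_def At0_def] B_op
      v[unfolded A0_def] z0[unfolded A0_def] MB1_closable i ii iii iv
    by blast
  show ?thesis
    unfolding A0_def AB_def
    using z0_in_resolvent_AB H1.closed_of_resolvent[OF AB_rel z0_in_resolvent_AB] resolvent_formula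
    by blast
qed

end
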